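(* Let $X,Y\in\mathcal L^2$ and $r=\mathrm{Corr}(X,Y)$. Assume one of the following: (i) $r=0$; (ii) $X$ and $Y$ have identical distributions; (iii) $X$ and $Y$ have different distributions and $|\mathrm{Supp}(Y)|>2$. Then $(X,Y)\in\mathrm{IC}_r$ if and only if $(X,Y)\in\mathrm{IC}^{\uparrow}_r$. Moreover, if (iii) holds and $(X,Y)\in\mathrm{IC}^{\uparrow}_r$, then $r=0$.
   Context: All random variables live on an atomless probability space. $\mathcal L^2$ denotes the set of non-degenerate real random variables with finite variance. A function $g:\mathbb R\to\mathbb R$ is admissible for $(X,Y)$ if it is measurable and $g(X),g(Y)\in\mathcal L^2$. $(X,Y)\in\mathrm{IC}_r$ means $\mathrm{Corr}(X,Y)=\mathrm{Corr}(g(X),g(Y))=r$ for all admissible $g$; $(X,Y)\in\mathrm{IC}^{\uparrow}_r$ means $\mathrm{Corr}(X,Y)=\mathrm{Corr}(g(X),g(Y))=r$ for all admissible increasing (non-strictly) $g$. $\mathrm{Supp}(Y)=\{x:\mathbb P(x-\epsilon<Y\le x+\epsilon)>0\ \forall\epsilon>0\}$. *)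

theory Defs
  imports "HOL-Probability.Probability"
begin

definition atomless :: "'a measure \<Rightarrow> bool" where
  "atomless M \<longleftrightarrow> (\<forall>A\<in>sets M. measure M A > 0 \<longrightarrow>
      (\<exists>B\<in>sets M. B \<subseteq> A \<and> 0 < measure M B \<and> measure M B < measure M A))"

definition L2 :: "'a measure \<Rightarrow> ('a \<Rightarrow> real) \<Rightarrow> bool" where
  "L2 M X \<longleftrightarrow> X \<in> borel_measurable M \<and> integrable M (\<lambda>\<omega>. (X \<omega>)\<^sup>2) \<and>
      \<not> (\<exists>c. AE \<omega> in M. X \<omega> = c)"

definition cov :: "'a measure \<Rightarrow> ('a \<Rightarrow> real) \<Rightarrow> ('a \<Rightarrow> real) \<Rightarrow> real" where
  "cov M X Y = (\<integral>\<omega>. (X \<omega> - (\<integral>\<eta>. X \<eta> \<partial>M)) * (Y \<omega> - (\<integral>\<eta>. Y \<eta> \<partial>M)) \<partial>M)"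

definition corr :: "'a measure \<Rightarrow> ('a \<Rightarrow> real) \<Rightarrow> ('a \<Rightarrow> real) \<Rightarrow> real" where
  "corr M X Y = cov M X Y / sqrt (cov M X X * cov M Y Y)"

definition admissible :: "'a measure \<Rightarrow> (real \<Rightarrow> real) \<Rightarrow> ('a \<Rightarrow> real) \<Rightarrow> ('a \<Rightarrow> real) \<Rightarrow> bool" where
  "admissible M g X Y \<longleftrightarrow> g \<in> borel_measurable borel \<and> L2 M (g \<circ> X) \<and> L2 M (g \<circ> Y)"

definition IC :: "'a measure \<Rightarrow> real \<Rightarrow> ('a \<Rightarrow> real) \<Rightarrow> ('a \<Rightarrow> real) \<Rightarrow> bool" where
  "IC M r X Y \<longleftrightarrow> corr M X Y = r \<and>
     (\<forall>g. admissible M g X Y \<longrightarrow> corr M (g \<circ> X) (g \<circ> Y) = r)"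

definition IC_mono :: "'a measure \<Rightarrow> real \<Rightarrow> ('a \<Rightarrow> real) \<Rightarrow> ('a \<Rightarrow> real) \<Rightarrow> bool" where
  "IC_mono M r X Y \<longleftrightarrow> corr M X Y = r \<and>
     (\<forall>g. admissible M g X Y \<longrightarrow> mono g \<longrightarrow> corr M (g \<circ> X) (g \<circ> Y) = r)"

definition supp :: "'a measure \<Rightarrow> ('a \<Rightarrow> real) \<Rightarrow> real set" where
  "supp M Y = {x. \<forall>\<epsilon>>0. measure M {\<omega>\<in>space M. x - \<epsilon> < Y \<omega> \<and> Y \<omega> \<le> x + \<epsilon>} > 0}"

end

theory Submission
  imports Defs
begin

text \<open>
  For an increasing \<open>h\<close> with \<open>h(X), h(Y)\<close> square integrable, the maps \<open>x \<mapsto> e x + h x\<close>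
  (\<open>e > 0\<close>) are strictly increasing, hence admissible; letting \<open>e \<rightarrow> 0\<close> gives
  \<open>Cov(h X, h Y) = r sqrt(Var(h X) Var(h Y))\<close>.

  If \<open>r = 0\<close> or \<open>X\<close> and \<open>Y\<close> are equally distributed, this says
  \<open>2 Cov(h X, h Y) = r (Var(h X) + Var(h Y))\<close>. The defect of this identity is a symmetric
  bilinear form in \<open>h\<close>, so by polarization it vanishes on pairs of indicators of half-lines
  \<open>(a, \<infinity>)\<close>, \<open>(b, \<infinity>)\<close>. That is, a signed combination of the joint and the product
  distributions of \<open>(X, Y)\<close>, \<open>(Y, X)\<close>, \<open>(X, X)\<close>, \<open>(Y, Y)\<close> vanishes on all quadrants,
  hence is zero; integrating \<open>g(x) g(y)\<close> against it gives the identity, and thus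
  \<open>Corr(g X, g Y) = r\<close>, for every admissible \<open>g\<close>.

  If \<open>r \<noteq> 0\<close>, applying the first identity to \<open>x h\<^sub>1 + y h\<^sub>2\<close> (\<open>x, y \<ge> 0\<close>) and comparing
  coefficients shows that the covariance matrices of \<open>(h\<^sub>1 X, h\<^sub>2 X)\<close> and \<open>(h\<^sub>1 Y, h\<^sub>2 Y)\<close>
  are proportional or both singular. Three support points of \<open>Y\<close> give thresholds
  \<open>t\<^sub>1 < t\<^sub>2\<close> at which the matrix of the indicators of \<open>(t\<^sub>1, \<infinity>)\<close>, \<open>(t\<^sub>2, \<infinity>)\<close> at \<open>Y\<close>
  is nonsingular; perturbing the second indicator by a positive multiple of a third increasing map
  then forces the survival functions of \<open>X\<close> and \<open>Y\<close> to agree everywhere.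
\<close>

section \<open>Symmetric \<open>2 \<times> 2\<close> matrices and real algebra\<close>

lemma eq_at_0_if_eq_at_right:
  fixes f g :: "real \<Rightarrow> real"
  assumes "isCont f 0" "isCont g 0" and "\<And>e. 0 < e \<Longrightarrow> f e = g e"
  shows "f 0 = g 0"
proof -
  have "((\<lambda>e. f e - g e) \<longlongrightarrow> f 0 - g 0) (at_right 0)"
    using assms(1,2) by (intro tendsto_diff) (auto simp: isCont_def filterlim_at_split)
  moreover have "\<forall>\<^sub>F e in at_right 0. f e - g e = 0"
    using eventually_at_right_less[of "0::real"] by eventually_elim (simp add: assms(3))
  then have "((\<lambda>e. f e - g e) \<longlongrightarrow> 0) (at_right 0)"
    by (rule tendsto_eventually)
  ultimately show ?thesis
    using tendsto_unique[OF trivial_limit_at_right_real] by fastforce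
qed

lemma quartic_coeffs_eq_0:
  fixes d0 d1 d2 d3 d4 :: real
  assumes "\<And>t. t \<in> {0, 1, 2, 3, 4} \<Longrightarrow> d0 + d1 * t + d2 * t^2 + d3 * t^3 + d4 * t^4 = 0"
  shows "d0 = 0" "d1 = 0" "d2 = 0" "d3 = 0" "d4 = 0"
  using assms[of 0] assms[of 1] assms[of 2] assms[of 3] assms[of 4] by simp_all

text \<open>A triple \<open>(a, b, g)\<close> encodes the symmetric matrix with rows \<open>(a, g)\<close> and \<open>(g, b)\<close>.\<close>

definition proportional_sym2 :: "real \<times> real \<times> real \<Rightarrow> real \<times> real \<times> real \<Rightarrow> bool" where
  "proportional_sym2 = (\<lambda>(a, b, g) (a', b', g'). a * b' = a' * b \<and> a * g' = a' * g \<and> b * g' = b' * g)"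

definition singular_sym2 :: "real \<times> real \<times> real \<Rightarrow> bool" where
  "singular_sym2 = (\<lambda>(a, b, g). g\<^sup>2 = a * b)"

lemma off_diagonal_sq_eq_if_not_proportional:
  fixes A B A' B' gX gY :: real
  assumes "(A\<^sup>2 * gY - A'\<^sup>2 * gX)\<^sup>2 = A\<^sup>2 * A'\<^sup>2 * (A * B' - A' * B)\<^sup>2"
    and "(B\<^sup>2 * gY - B'\<^sup>2 * gX)\<^sup>2 = B\<^sup>2 * B'\<^sup>2 * (A * B' - A' * B)\<^sup>2"
    and "A * B * gY = A' * B' * gX" and "A * B' - A' * B \<noteq> 0"
  shows "gX\<^sup>2 = A\<^sup>2 * B\<^sup>2"
proof -
  define D where "D = A * B' - A' * B"
  have "B * (A\<^sup>2 * gY - A'\<^sup>2 * gX) = A' * gX * D"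
    using assms(3) unfolding D_def by algebra
  then have "A'\<^sup>2 * D\<^sup>2 * (gX\<^sup>2 - A\<^sup>2 * B\<^sup>2) = 0"
    using assms(1) unfolding D_def by algebra
  moreover have "A * (B\<^sup>2 * gY - B'\<^sup>2 * gX) = - (B' * gX * D)"
    using assms(3) unfolding D_def by algebra
  then have "B'\<^sup>2 * D\<^sup>2 * (gX\<^sup>2 - A\<^sup>2 * B\<^sup>2) = 0"
    using assms(2) unfolding D_def by algebra
  moreover have "D \<noteq> 0" "A' \<noteq> 0 \<or> B' \<noteq> 0"
    using assms(4) unfolding D_def by auto
  ultimately show ?thesis by auto
qed

lemma proportional_or_singular_if_coeffs:
  fixes A B A' B' gX gY w :: real
  assumes c1: "A * A' * w = A\<^sup>2 * gY + A'\<^sup>2 * gX"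
    and c2: "w\<^sup>2 + 2 * A * A' * B * B' = A\<^sup>2 * B'\<^sup>2 + 4 * gX * gY + A'\<^sup>2 * B\<^sup>2"
    and c3: "B * B' * w = B\<^sup>2 * gY + B'\<^sup>2 * gX"
  shows "proportional_sym2 (A\<^sup>2, B\<^sup>2, gX) (A'\<^sup>2, B'\<^sup>2, gY)
    \<or> singular_sym2 (A\<^sup>2, B\<^sup>2, gX) \<and> singular_sym2 (A'\<^sup>2, B'\<^sup>2, gY)"
proof -
  have KA: "(A\<^sup>2 * gY - A'\<^sup>2 * gX)\<^sup>2 = A\<^sup>2 * A'\<^sup>2 * (A * B' - A' * B)\<^sup>2"
    using c1 c2 by algebra
  have KB: "(B\<^sup>2 * gY - B'\<^sup>2 * gX)\<^sup>2 = B\<^sup>2 * B'\<^sup>2 * (A * B' - A' * B)\<^sup>2"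
    using c3 c2 by algebra
  have cross: "(A * B' - A' * B) * (A * B * gY - A' * B' * gX) = 0"
    using c1 c3 by algebra
  show ?thesis
  proof (cases "A * B' - A' * B = 0")
    case True
    then have "A\<^sup>2 * B'\<^sup>2 = A'\<^sup>2 * B\<^sup>2"
      by (metis power_mult_distrib eq_iff_diff_eq_0)
    with True KA KB show ?thesis
      unfolding proportional_sym2_def by auto
  next
    case False
    with cross have cross': "A * B * gY = A' * B' * gX" by simp
    have "gX\<^sup>2 = A\<^sup>2 * B\<^sup>2"
      using off_diagonal_sq_eq_if_not_proportional[OF KA KB cross' False] .
    moreover have "gY\<^sup>2 = A'\<^sup>2 * B'\<^sup>2"
    proof (rule off_diagonal_sq_eq_if_not_proportional[where A = A' and B = B' and A' = A and B' = B])
      show "(A'\<^sup>2 * gX - A\<^sup>2 * gY)\<^sup>2 = A'\<^sup>2 * A\<^sup>2 * (A' * B - A * B')\<^sup>2" using KA by algebra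
      show "(B'\<^sup>2 * gX - B\<^sup>2 * gY)\<^sup>2 = B'\<^sup>2 * B\<^sup>2 * (A' * B - A * B')\<^sup>2" using KB by algebra
    qed (use cross' False in auto)
    ultimately show ?thesis
      unfolding singular_sym2_def by (simp add: power_mult_distrib)
  qed
qed

lemma proportional_or_singular_if_sqrt_identity:
  fixes p w q aX bX gX aY bY gY r :: real
  assumes r: "r \<noteq> 0"
    and QX: "\<And>x y. 0 \<le> x \<Longrightarrow> 0 \<le> y \<Longrightarrow> 0 \<le> aX * x\<^sup>2 + 2 * gX * x * y + bX * y\<^sup>2"
    and QY: "\<And>x y. 0 \<le> x \<Longrightarrow> 0 \<le> y \<Longrightarrow> 0 \<le> aY * x\<^sup>2 + 2 * gY * x * y + bY * y\<^sup>2"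
    and H: "\<And>x y. 0 \<le> x \<Longrightarrow> 0 \<le> y \<Longrightarrow> p * x\<^sup>2 + w * x * y + q * y\<^sup>2 =
      r * sqrt ((aX * x\<^sup>2 + 2 * gX * x * y + bX * y\<^sup>2) * (aY * x\<^sup>2 + 2 * gY * x * y + bY * y\<^sup>2))"
  shows "proportional_sym2 (aX, bX, gX) (aY, bY, gY)
    \<or> singular_sym2 (aX, bX, gX) \<and> singular_sym2 (aY, bY, gY)"
proof -
  define A B A' B' where "A = sqrt aX" "B = sqrt bX" "A' = sqrt aY" "B' = sqrt bY"
  have sq: "aX = A\<^sup>2" "bX = B\<^sup>2" "aY = A'\<^sup>2" "bY = B'\<^sup>2"
    using QX[of 1 0] QX[of 0 1] QY[of 1 0] QY[of 0 1] unfolding A_B_A'_B'_def by simp_all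
  have p: "p = r * A * A'" and q: "q = r * B * B'"
    using H[of 1 0] H[of 0 1] unfolding A_B_A'_B'_def by (simp_all add: real_sqrt_mult)
  \<comment> \<open>squared along the ray \<open>(1, t)\<close>, the identity is a quartic in \<open>t\<close> vanishing for \<open>t \<ge> 0\<close>\<close>
  have "(p\<^sup>2 - r\<^sup>2 * aX * aY) + (2 * p * w - 2 * r\<^sup>2 * (aX * gY + aY * gX)) * t
      + (w\<^sup>2 + 2 * p * q - r\<^sup>2 * (aX * bY + 4 * gX * gY + aY * bX)) * t\<^sup>2
      + (2 * w * q - 2 * r\<^sup>2 * (gX * bY + bX * gY)) * t ^ 3 + (q\<^sup>2 - r\<^sup>2 * bX * bY) * t ^ 4 = 0"
    if "t \<in> {0, 1, 2, 3, 4}" for t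
  proof -
    have "0 \<le> t" using that by auto
    then have "(p + w * t + q * t\<^sup>2)\<^sup>2 = r\<^sup>2 * ((aX + 2 * gX * t + bX * t\<^sup>2) * (aY + 2 * gY * t + bY * t\<^sup>2))"
      using H[of 1 t] QX[of 1 t] QY[of 1 t] by (simp add: power_mult_distrib)
    then show ?thesis
      by (simp add: power2_eq_square power3_eq_cube power4_eq_xxxx algebra_simps)
  qed
  note coeffs = quartic_coeffs_eq_0[OF this]
  define v where "v = w / r"
  have w: "w = r * v" using r unfolding v_def by simp
  have "r\<^sup>2 * (A * A' * v - (A\<^sup>2 * gY + A'\<^sup>2 * gX)) = 0"
    using coeffs(2) unfolding p w sq by algebra
  moreover have "r\<^sup>2 * (v\<^sup>2 + 2 * A * A' * B * B' - (A\<^sup>2 * B'\<^sup>2 + 4 * gX * gY + A'\<^sup>2 * B\<^sup>2)) = 0"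
    using coeffs(3) unfolding p q w sq by algebra
  moreover have "r\<^sup>2 * (B * B' * v - (B\<^sup>2 * gY + B'\<^sup>2 * gX)) = 0"
    using coeffs(4) unfolding q w sq by algebra
  ultimately have "A * A' * v = A\<^sup>2 * gY + A'\<^sup>2 * gX"
    "v\<^sup>2 + 2 * A * A' * B * B' = A\<^sup>2 * B'\<^sup>2 + 4 * gX * gY + A'\<^sup>2 * B\<^sup>2"
    "B * B' * v = B\<^sup>2 * gY + B'\<^sup>2 * gX"
    using r by simp_all
  then show ?thesis
    unfolding sq by (rule proportional_or_singular_if_coeffs)
qed

lemma survival_values_eq_if_proportional:
  fixes u1 u2 v1 v2 :: real
  assumes v: "0 < v2" "v2 < v1" "v1 < 1" and u1: "u1 - u1\<^sup>2 \<noteq> 0"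
    and "proportional_sym2 (u1 - u1\<^sup>2, u2 - u2\<^sup>2, u2 - u1 * u2) (v1 - v1\<^sup>2, v2 - v2\<^sup>2, v2 - v1 * v2)"
  shows "u1 = v1 \<and> u2 = v2"
proof -
  have p: "(u1 - u1\<^sup>2) * (v2 - v2\<^sup>2) = (v1 - v1\<^sup>2) * (u2 - u2\<^sup>2)"
    "(u1 - u1\<^sup>2) * (v2 - v1 * v2) = (v1 - v1\<^sup>2) * (u2 - u1 * u2)"
    "(u2 - u2\<^sup>2) * (v2 - v1 * v2) = (v2 - v2\<^sup>2) * (u2 - u1 * u2)"
    using assms(5) unfolding proportional_sym2_def by simp_all
  have "v2 - v2\<^sup>2 \<noteq> 0"
    using v by (simp add: power2_eq_square)
  with p(1) u1 have "u2 \<noteq> 0" by auto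
  have "1 - u1 \<noteq> 0" using u1 by (auto simp: power2_eq_square)
  moreover have "(1 - u1) * (1 - v1) * (u1 * v2 - v1 * u2) = 0" using p(2) by algebra
  ultimately have E1: "u1 * v2 = v1 * u2" using v by simp
  have "u2 * v2 * ((1 - u2) * (1 - v1) - (1 - v2) * (1 - u1)) = 0" using p(3) by algebra
  then have E2: "(1 - u2) * (1 - v1) = (1 - v2) * (1 - u1)" using \<open>u2 \<noteq> 0\<close> v by simp
  have "(u1 - v1) * (v1 - v2) = 0" using E1 E2 by algebra
  then have "u1 = v1" using v by simp
  with E1 v show ?thesis by simp
qed

lemma survival_value_eq_if_cov_eq:
  fixes u v :: "real \<Rightarrow> real"
  assumes "u s = v s" "0 < v s" "v s < 1"
    and "u (max s t) - u s * u t = v (max s t) - v s * v t"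
  shows "u t = v t"
proof (cases "t \<le> s")
  case True
  then have "v s * (u t - v t) = 0"
    using assms(1,4) by (auto simp: max_def algebra_simps)
  then show ?thesis using assms(2) by simp
next
  case False
  then have "(1 - v s) * (u t - v t) = 0"
    using assms(1,4) by (simp add: max_def algebra_simps)
  then show ?thesis using assms(3) by simp
qed

lemma survival_matrix_nonsingular:
  fixes v1 v2 :: real
  assumes "0 < v2" "v2 < v1" "v1 < 1"
  shows "\<not> singular_sym2 (v1 - v1\<^sup>2, v2 - v2\<^sup>2, v2 - v1 * v2)"
proof
  assume "singular_sym2 (v1 - v1\<^sup>2, v2 - v2\<^sup>2, v2 - v1 * v2)"
  then have "(v2 - v1 * v2)\<^sup>2 = (v1 - v1\<^sup>2) * (v2 - v2\<^sup>2)"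
    by (simp add: singular_sym2_def)
  then have "v2 * (1 - v1) * (v2 - v1) = 0"
    by algebra
  then show False using assms by simp
qed

lemma obtain_three_increasing:
  fixes S :: "'a :: linorder set"
  assumes "infinite S \<or> card S > 2"
  obtains a b c where "a \<in> S" "b \<in> S" "c \<in> S" "a < b" "b < c"
proof -
  obtain T where T: "T \<subseteq> S" "finite T" "card T = 3"
  proof (cases "finite S")
    case True
    with assms have "3 \<le> card S" by simp
    then show ?thesis by (rule obtain_subset_with_card_n) (simp add: that)
  next
    case False
    then show ?thesis using infinite_arbitrarily_large[of S 3] that by blast
  qed
  define xs where "xs = sorted_list_of_set T"
  have xs: "length xs = 3" "set xs = T" "sorted_wrt (<) xs"
    using T by (simp_all add: xs_def)
  then have "xs ! 0 < xs ! 1" "xs ! 1 < xs ! 2"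
    by (simp_all add: sorted_wrt_iff_nth_less)
  moreover have "xs ! 0 \<in> S" "xs ! 1 \<in> S" "xs ! 2 \<in> S"
    using xs(1,2) T(1) nth_mem[of _ xs] by auto
  ultimately show ?thesis
    by (intro that[of "xs ! 0" "xs ! 1" "xs ! 2"])
qed

section \<open>Weighted sums of finite measures\<close>

text \<open>Only meaningful for measures on the same \<open>\<sigma>\<close>-algebra; the first summand supplies it.\<close>

definition add_measure :: "'b measure \<Rightarrow> 'b measure \<Rightarrow> 'b measure" where
  "add_measure A B = measure_of (space A) (sets A) (\<lambda>S. emeasure A S + emeasure B S)"

lemma sets_add_measure [simp]: "sets (add_measure A B) = sets A"
  unfolding add_measure_def using sets.space_closed[of A] sets.sigma_sets_eq[of A] by simp

lemma space_add_measure [simp]: "space (add_measure A B) = space A"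
  unfolding add_measure_def using sets.space_closed[of A] by simp

lemma emeasure_add_measure:
  assumes "sets B = sets A" "S \<in> sets A"
  shows "emeasure (add_measure A B) S = emeasure A S + emeasure B S"
  unfolding add_measure_def
proof (rule emeasure_measure_of_sigma)
  show "countably_additive (sets A) (\<lambda>S. emeasure A S + emeasure B S)"
    unfolding countably_additive_def
  proof (intro allI impI)
    fix F :: "nat \<Rightarrow> _"
    assume F: "range F \<subseteq> sets A" "disjoint_family F" "\<Union> (range F) \<in> sets A"
    have "(\<Sum>i. emeasure A (F i) + emeasure B (F i)) = (\<Sum>i. emeasure A (F i)) + (\<Sum>i. emeasure B (F i))"
      by (rule suminf_add[OF summableI summableI, symmetric])
    also have "\<dots> = emeasure A (\<Union> (range F)) + emeasure B (\<Union> (range F))"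
      using suminf_emeasure[OF F(1,2)] suminf_emeasure[of F B] F(1,2) assms(1) by simp
    finally show "(\<Sum>i. emeasure A (F i) + emeasure B (F i)) =
        emeasure A (\<Union> (range F)) + emeasure B (\<Union> (range F))" .
  qed
qed (use assms(2) sets.sigma_algebra_axioms in \<open>auto simp: positive_def\<close>)

lemma nn_integral_add_measure:
  assumes sets_eq: "sets B = sets A" and "f \<in> borel_measurable A"
  shows "nn_integral (add_measure A B) f = nn_integral A f + nn_integral B f"
  using assms(2)
proof induction
  case (cong f g)
  have "space B = space A" using sets_eq_imp_space_eq[OF sets_eq] .
  with cong show ?case
    by (metis (no_types, lifting) nn_integral_cong space_add_measure)
next
  case (set S)
  then show ?case using emeasure_add_measure[OF sets_eq] sets_eq by simp
next
  case (mult f c)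
  have "f \<in> borel_measurable B" "f \<in> borel_measurable (add_measure A B)"
    using mult(2) sets_eq by (simp_all cong: measurable_cong_sets)
  with mult show ?case
    by (simp add: nn_integral_cmult distrib_left)
next
  case (add f g)
  have "f \<in> borel_measurable B" "g \<in> borel_measurable B"
    "f \<in> borel_measurable (add_measure A B)" "g \<in> borel_measurable (add_measure A B)"
    using add sets_eq by (simp_all cong: measurable_cong_sets)
  with add show ?case
    by (simp add: nn_integral_add algebra_simps)
next
  case (seq U)
  have UB: "U i \<in> borel_measurable B" and UM: "U i \<in> borel_measurable (add_measure A B)" for i
    using seq(1) sets_eq by (simp_all cong: measurable_cong_sets)
  have SU: "Sup (range U) = (\<lambda>x. SUP i. U i x)" by (simp add: fun_eq_iff SUP_apply image_comp)
  have "nn_integral (add_measure A B) (Sup (range U)) = (SUP i. nn_integral A (U i) + nn_integral B (U i))"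
    unfolding SU nn_integral_monotone_convergence_SUP[OF seq.hyps(3) UM] using seq.IH by simp
  also have "\<dots> = (SUP i. nn_integral A (U i)) + (SUP i. nn_integral B (U i))"
    using seq.hyps(3) by (intro ennreal_SUP_add) (auto simp: incseq_def le_fun_def intro!: nn_integral_mono)
  also have "\<dots> = nn_integral A (Sup (range U)) + nn_integral B (Sup (range U))"
    unfolding SU using nn_integral_monotone_convergence_SUP[OF seq.hyps(3) seq.hyps(1)]
      nn_integral_monotone_convergence_SUP[OF seq.hyps(3) UB] by simp
  finally show ?case .
qed

lemma
  fixes f :: "'b \<Rightarrow> real"
  assumes sets_eq: "sets B = sets A" and "integrable A f" "integrable B f"
  shows integrable_add_measure: "integrable (add_measure A B) f"
    and integral_add_measure: "integral\<^sup>L (add_measure A B) f = integral\<^sup>L A f + integral\<^sup>L B f"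
proof -
  have f: "f \<in> borel_measurable A" using assms(2) by simp
  have fin: "(\<integral>\<^sup>+x. ennreal (h (f x)) \<partial>C) < \<infinity>"
    if "integrable C f" "\<And>x. h x \<le> \<bar>x\<bar>" for C and h :: "real \<Rightarrow> real"
  proof -
    have "(\<integral>\<^sup>+x. ennreal (h (f x)) \<partial>C) \<le> (\<integral>\<^sup>+x. ennreal (norm (f x)) \<partial>C)"
      using that(2) by (intro nn_integral_mono) (simp add: ennreal_leI)
    also have "\<dots> < \<infinity>" using that(1) unfolding integrable_iff_bounded by simp
    finally show ?thesis .
  qed
  show int: "integrable (add_measure A B) f"
  proof -
    have "(\<integral>\<^sup>+x. ennreal (norm (f x)) \<partial>add_measure A B) =
        (\<integral>\<^sup>+x. ennreal (norm (f x)) \<partial>A) + (\<integral>\<^sup>+x. ennreal (norm (f x)) \<partial>B)"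
      using f by (intro nn_integral_add_measure[OF sets_eq]) auto
    then show ?thesis
      using assms f unfolding integrable_iff_bounded by (simp cong: measurable_cong_sets)
  qed
  have "(\<integral>\<^sup>+x. ennreal (f x) \<partial>add_measure A B) = (\<integral>\<^sup>+x. ennreal (f x) \<partial>A) + (\<integral>\<^sup>+x. ennreal (f x) \<partial>B)"
    "(\<integral>\<^sup>+x. ennreal (- f x) \<partial>add_measure A B) = (\<integral>\<^sup>+x. ennreal (- f x) \<partial>A) + (\<integral>\<^sup>+x. ennreal (- f x) \<partial>B)"
    using f by (intro nn_integral_add_measure[OF sets_eq]; simp)+
  then show "integral\<^sup>L (add_measure A B) f = integral\<^sup>L A f + integral\<^sup>L B f"
    unfolding real_lebesgue_integral_def[OF int] real_lebesgue_integral_def[OF assms(2)]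
      real_lebesgue_integral_def[OF assms(3)]
    using fin[of A "\<lambda>x. x", OF assms(2) abs_ge_self] fin[of B "\<lambda>x. x", OF assms(3) abs_ge_self]
      fin[of A uminus, OF assms(2) abs_ge_minus_self] fin[of B uminus, OF assms(3) abs_ge_minus_self]
    by (simp add: enn2real_plus)
qed

lemma finite_measure_add_measure:
  assumes "finite_measure A" "finite_measure B" "sets B = sets A"
  shows "finite_measure (add_measure A B)"
proof (rule finite_measureI)
  have "space B = space A" using sets_eq_imp_space_eq[OF assms(3)] .
  then show "emeasure (add_measure A B) (space (add_measure A B)) \<noteq> \<infinity>"
    using emeasure_add_measure[OF assms(3)] assms(1,2)
    by (simp add: finite_measure.emeasure_finite)
qed

fun weighted_sum_measure :: "'b measure \<Rightarrow> (real \<times> 'b measure) list \<Rightarrow> 'b measure" where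
  "weighted_sum_measure N [] = null_measure N"
| "weighted_sum_measure N ((w, \<mu>) # ms) =
     add_measure (density \<mu> (\<lambda>_. ennreal w)) (weighted_sum_measure N ms)"

lemma sets_weighted_sum_measure:
  assumes "\<forall>(w, \<mu>) \<in> set ms. sets \<mu> = sets N"
  shows "sets (weighted_sum_measure N ms) = sets N"
  using assms by (induction ms) auto

lemma finite_measure_density_const:
  assumes "finite_measure \<mu>"
  shows "finite_measure (density \<mu> (\<lambda>_. ennreal w))"
  using assms by (intro finite_measureI)
    (simp add: emeasure_density_const finite_measure.emeasure_finite ennreal_mult_eq_top_iff)

lemma finite_measure_weighted_sum_measure:
  assumes "\<forall>(w, \<mu>) \<in> set ms. finite_measure \<mu> \<and> sets \<mu> = sets N"
  shows "finite_measure (weighted_sum_measure N ms)"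
  using assms
proof (induction ms)
  case Nil
  show ?case by (rule finite_measureI) simp
next
  case (Cons m ms)
  have "sets (weighted_sum_measure N ms) = sets N"
    using Cons.prems by (intro sets_weighted_sum_measure) auto
  with Cons show ?case
    by (cases m) (auto intro!: finite_measure_add_measure finite_measure_density_const)
qed

lemma measure_weighted_sum_measure:
  assumes "\<forall>(w, \<mu>) \<in> set ms. 0 \<le> w \<and> finite_measure \<mu> \<and> sets \<mu> = sets N" and "S \<in> sets N"
  shows "measure (weighted_sum_measure N ms) S = (\<Sum>(w, \<mu>) \<leftarrow> ms. w * measure \<mu> S)"
  using assms(1)
proof (induction ms)
  case Nil
  show ?case by (simp add: measure_def)
next
  case (Cons m ms)
  obtain w \<mu> where m: "m = (w, \<mu>)" by fastforce
  have hyps: "0 \<le> w" "finite_measure \<mu>" "sets \<mu> = sets N"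
    "\<forall>(w, \<mu>) \<in> set ms. 0 \<le> w \<and> finite_measure \<mu> \<and> sets \<mu> = sets N"
    using Cons.prems m by auto
  have "finite_measure (weighted_sum_measure N ms)" "sets (weighted_sum_measure N ms) = sets N"
    using hyps(4) by (auto intro!: finite_measure_weighted_sum_measure sets_weighted_sum_measure)
  moreover have "finite_measure (density \<mu> (\<lambda>_. ennreal w))"
    using hyps(2) by (rule finite_measure_density_const)
  ultimately have "measure (add_measure (density \<mu> (\<lambda>_. ennreal w)) (weighted_sum_measure N ms)) S =
      measure (density \<mu> (\<lambda>_. ennreal w)) S + measure (weighted_sum_measure N ms) S"
    using assms(2) hyps unfolding measure_def
    by (simp add: emeasure_add_measure enn2real_plus finite_measure.emeasure_finite less_top[symmetric])
  then show ?case
    using assms(2) Cons.IH hyps by (simp add: m measure_density_const)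
qed

lemma integrable_weighted_sum_measure:
  fixes f :: "'b \<Rightarrow> real"
  assumes "\<forall>(w, \<mu>) \<in> set ms. 0 \<le> w \<and> sets \<mu> = sets N \<and> integrable \<mu> f"
    and "f \<in> borel_measurable N"
  shows "integrable (weighted_sum_measure N ms) f"
  using assms(1)
proof (induction ms)
  case Nil
  show ?case using assms(2) by (simp add: integrable_iff_bounded)
next
  case (Cons m ms)
  obtain w \<mu> where m: "m = (w, \<mu>)" by fastforce
  have "sets (weighted_sum_measure N ms) = sets (density \<mu> (\<lambda>_. ennreal w))"
    using Cons.prems m by (auto intro!: sets_weighted_sum_measure)
  moreover have "integrable (density \<mu> (\<lambda>_. ennreal w)) f"
    using Cons.prems m by (subst integrable_density) auto
  ultimately show ?case
    using Cons by (simp add: m integrable_add_measure)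
qed

lemma integral_weighted_sum_measure:
  fixes f :: "'b \<Rightarrow> real"
  assumes "\<forall>(w, \<mu>) \<in> set ms. 0 \<le> w \<and> sets \<mu> = sets N \<and> integrable \<mu> f"
    and "f \<in> borel_measurable N"
  shows "integral\<^sup>L (weighted_sum_measure N ms) f = (\<Sum>(w, \<mu>) \<leftarrow> ms. w * integral\<^sup>L \<mu> f)"
  using assms(1)
proof (induction ms)
  case Nil
  show ?case by (simp add: integral_eq_zero_AE)
next
  case (Cons m ms)
  obtain w \<mu> where m: "m = (w, \<mu>)" by fastforce
  have "sets (weighted_sum_measure N ms) = sets (density \<mu> (\<lambda>_. ennreal w))"
    using Cons.prems m by (auto intro!: sets_weighted_sum_measure)
  moreover have "integrable (density \<mu> (\<lambda>_. ennreal w)) f"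
    using Cons.prems m by (subst integrable_density) auto
  moreover have "integral\<^sup>L (density \<mu> (\<lambda>_. ennreal w)) f = w * integral\<^sup>L \<mu> f"
    using Cons.prems m by (subst integral_density) auto
  moreover have "integrable (weighted_sum_measure N ms) f"
    using Cons.prems assms(2) by (intro integrable_weighted_sum_measure) auto
  ultimately show ?case
    using Cons by (simp add: m integral_add_measure)
qed

lemma measure_eqI_quadrants:
  fixes P N :: "(real \<times> real) measure"
  assumes "finite_measure P" "finite_measure N" "sets P = sets borel" "sets N = sets borel"
    and "\<And>a b. measure P ({a<..} \<times> {b<..}) = measure N ({a<..} \<times> {b<..})"
  shows "P = N"
proof (rule measure_eqI_generator_eq[where \<Omega> = UNIV and E = "range (\<lambda>a. {fst a<..} \<times> {snd a<..})"
      and A = "\<lambda>i::nat. {- real i<..} \<times> {- real i<..}"])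
  show "Int_stable (range (\<lambda>a. {fst a<..} \<times> {snd a<..} :: (real \<times> real) set))"
  proof (rule Int_stableI)
    fix Q R :: "(real \<times> real) set"
    assume "Q \<in> range (\<lambda>a. {fst a<..} \<times> {snd a<..})" "R \<in> range (\<lambda>a. {fst a<..} \<times> {snd a<..})"
    then obtain a c where "Q = {fst a<..} \<times> {snd a<..}" "R = {fst c<..} \<times> {snd c<..}" by auto
    then have "Q \<inter> R = {max (fst a) (fst c)<..} \<times> {max (snd a) (snd c)<..}"
      by auto
    then show "Q \<inter> R \<in> range (\<lambda>a. {fst a<..} \<times> {snd a<..})"
      by (intro image_eqI[where x = "(max (fst a) (fst c), max (snd a) (snd c))"]) auto
  qed
  have "eucl_less a x \<longleftrightarrow> fst a < fst x \<and> snd a < snd x" for a x :: "real \<times> real"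
    by (auto simp: eucl_less_def Basis_prod_def inner_prod_def)
  then have "{x. eucl_less a x} = {fst a<..} \<times> {snd a<..}" for a :: "real \<times> real"
    by (auto simp: mem_Times_iff)
  then have "range (\<lambda>a. {x. eucl_less a x}) = range (\<lambda>a. {fst a<..} \<times> {snd a<..} :: (real \<times> real) set)"
    by simp
  then have borel: "sets (borel :: (real \<times> real) measure) =
      sigma_sets UNIV (range (\<lambda>a. {fst a<..} \<times> {snd a<..}))"
    by (subst borel_eq_greaterThan) simp
  then show "sets P = sigma_sets UNIV (range (\<lambda>a. {fst a<..} \<times> {snd a<..}))"
    and "sets N = sigma_sets UNIV (range (\<lambda>a. {fst a<..} \<times> {snd a<..}))"
    using assms(3,4) by simp_all
  show "range (\<lambda>i::nat. {- real i<..} \<times> {- real i<..}) \<subseteq> range (\<lambda>a. {fst a<..} \<times> {snd a<..})"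
    by (auto intro!: image_eqI[where x = "(- real i, - real i)" for i])
  show "(\<Union>i::nat. {- real i<..} \<times> {- real i<..}) = UNIV"
  proof (intro set_eqI iffI UNIV_I)
    fix x :: "real \<times> real"
    obtain n :: nat where "max (- fst x) (- snd x) < real n" using reals_Archimedean2 by blast
    then show "x \<in> (\<Union>i::nat. {- real i<..} \<times> {- real i<..})" by (intro UN_I[of n]) (auto simp: mem_Times_iff)
  qed
  show "emeasure P ({- real i<..} \<times> {- real i<..}) \<noteq> \<infinity>" for i
    using assms(1) by (simp add: finite_measure.emeasure_finite)
  fix Q :: "(real \<times> real) set" assume "Q \<in> range (\<lambda>a. {fst a<..} \<times> {snd a<..})"
  then obtain a where "Q = {fst a<..} \<times> {snd a<..}" by auto
  then show "emeasure P Q = emeasure N Q"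
    using assms(1,2,5) by (simp add: finite_measure.emeasure_eq_measure)
qed (auto)

lemma integral_combination_eq_0_if_quadrants:
  fixes ms :: "(real \<times> (real \<times> real) measure) list" and f :: "real \<times> real \<Rightarrow> real"
  assumes ms: "\<forall>(c, \<mu>) \<in> set ms. finite_measure \<mu> \<and> sets \<mu> = sets borel \<and> integrable \<mu> f"
    and f: "f \<in> borel_measurable borel"
    and quadrants: "\<And>a b. (\<Sum>(c, \<mu>) \<leftarrow> ms. c * measure \<mu> ({a<..} \<times> {b<..})) = 0"
  shows "(\<Sum>(c, \<mu>) \<leftarrow> ms. c * integral\<^sup>L \<mu> f) = 0"
proof -
  \<comment> \<open>the positive and the negative parts of the coefficients give two measures
    that agree on quadrants\<close>
  define pos where "pos = map (\<lambda>(c, \<mu>). (max c 0, \<mu>)) ms"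
  define neg where "neg = map (\<lambda>(c, \<mu>). (max (- c) 0, \<mu>)) ms"
  have pos: "\<forall>(w, \<mu>) \<in> set pos. 0 \<le> w \<and> finite_measure \<mu> \<and> sets \<mu> = sets borel \<and> integrable \<mu> f"
    and neg: "\<forall>(w, \<mu>) \<in> set neg. 0 \<le> w \<and> finite_measure \<mu> \<and> sets \<mu> = sets borel \<and> integrable \<mu> f"
    using ms unfolding pos_def neg_def by auto
  have combination: "(\<Sum>(c, \<mu>) \<leftarrow> ms. c * F \<mu>) =
      (\<Sum>(w, \<mu>) \<leftarrow> pos. w * F \<mu>) - (\<Sum>(w, \<mu>) \<leftarrow> neg. w * F \<mu>)" for F :: "(real \<times> real) measure \<Rightarrow> real"
    unfolding pos_def neg_def sum_list_subtractf[symmetric]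
    by (induction ms) (auto simp: max_def algebra_simps)
  have "weighted_sum_measure borel pos = weighted_sum_measure borel neg"
  proof (rule measure_eqI_quadrants)
    show "finite_measure (weighted_sum_measure borel pos)"
      "finite_measure (weighted_sum_measure borel neg)"
      "sets (weighted_sum_measure borel pos) = sets borel"
      "sets (weighted_sum_measure borel neg) = sets borel"
      using pos neg by (auto intro!: finite_measure_weighted_sum_measure sets_weighted_sum_measure)
    fix a b :: real
    have Q: "{a<..} \<times> {b<..} \<in> sets (borel :: (real \<times> real) measure)"
      by (simp add: borel_open open_Times)
    show "measure (weighted_sum_measure borel pos) ({a<..} \<times> {b<..}) =
        measure (weighted_sum_measure borel neg) ({a<..} \<times> {b<..})"
      using quadrants[of a b] combination[of "\<lambda>\<mu>. measure \<mu> ({a<..} \<times> {b<..})"]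
        measure_weighted_sum_measure[OF _ Q, of pos] measure_weighted_sum_measure[OF _ Q, of neg] pos neg
      by fastforce
  qed
  then show ?thesis
    using combination[of "\<lambda>\<mu>. integral\<^sup>L \<mu> f"] integral_weighted_sum_measure[of pos borel f]
      integral_weighted_sum_measure[of neg borel f] pos neg f by fastforce
qed

lemma
  fixes f :: "'b \<Rightarrow> real" and g :: "'c \<Rightarrow> real"
  assumes "sigma_finite_measure M1" "sigma_finite_measure M2" "integrable M1 f" "integrable M2 g"
  shows integrable_pair_measure_mult: "integrable (M1 \<Otimes>\<^sub>M M2) (\<lambda>z. f (fst z) * g (snd z))"
    and integral_pair_measure_mult:
      "integral\<^sup>L (M1 \<Otimes>\<^sub>M M2) (\<lambda>z. f (fst z) * g (snd z)) = integral\<^sup>L M1 f * integral\<^sup>L M2 g"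
proof -
  interpret pair_sigma_finite M1 M2
    using assms(1,2) by (simp add: pair_sigma_finite_def)
  have [measurable]: "f \<in> borel_measurable M1" "g \<in> borel_measurable M2"
    using assms(3,4) by simp_all
  have "(\<integral>\<^sup>+z. ennreal (norm (f (fst z) * g (snd z))) \<partial>(M1 \<Otimes>\<^sub>M M2))
      = (\<integral>\<^sup>+x. \<integral>\<^sup>+y. ennreal (norm (f x)) * ennreal (norm (g y)) \<partial>M2 \<partial>M1)"
    by (subst M2.nn_integral_fst[symmetric]) (auto simp: abs_mult ennreal_mult)
  also have "\<dots> = (\<integral>\<^sup>+x. ennreal (norm (f x)) \<partial>M1) * (\<integral>\<^sup>+y. ennreal (norm (g y)) \<partial>M2)"
    by (simp add: nn_integral_cmult nn_integral_multc)
  also have "\<dots> < \<infinity>"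
    using assms(3,4) unfolding integrable_iff_bounded by (simp add: ennreal_mult_less_top)
  finally show int: "integrable (M1 \<Otimes>\<^sub>M M2) (\<lambda>z. f (fst z) * g (snd z))"
    unfolding integrable_iff_bounded by simp
  show "integral\<^sup>L (M1 \<Otimes>\<^sub>M M2) (\<lambda>z. f (fst z) * g (snd z)) = integral\<^sup>L M1 f * integral\<^sup>L M2 g"
    using integral_fst'[OF int] by simp
qed

section \<open>Covariance\<close>

definition square_integrable :: "'a measure \<Rightarrow> ('a \<Rightarrow> real) \<Rightarrow> bool" where
  "square_integrable M f \<longleftrightarrow> f \<in> borel_measurable M \<and> integrable M (\<lambda>\<omega>. (f \<omega>)\<^sup>2)"

lemma L2_iff_square_integrable:
  "L2 M X \<longleftrightarrow> square_integrable M X \<and> \<not> (\<exists>c. AE \<omega> in M. X \<omega> = c)"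
  unfolding L2_def square_integrable_def by auto

lemma square_integrable_mult:
  assumes "square_integrable M f" "square_integrable M g"
  shows "integrable M (\<lambda>\<omega>. f \<omega> * g \<omega>)"
proof (rule Bochner_Integration.integrable_bound)
  show "integrable M (\<lambda>\<omega>. (f \<omega>)\<^sup>2 + (g \<omega>)\<^sup>2)" "(\<lambda>\<omega>. f \<omega> * g \<omega>) \<in> borel_measurable M"
    using assms unfolding square_integrable_def by auto
  have "\<bar>f \<omega> * g \<omega>\<bar> \<le> (f \<omega>)\<^sup>2 + (g \<omega>)\<^sup>2" for \<omega>
  proof -
    have "2 * (\<bar>f \<omega>\<bar> * \<bar>g \<omega>\<bar>) \<le> (f \<omega>)\<^sup>2 + (g \<omega>)\<^sup>2"
      using sum_squares_bound[of "\<bar>f \<omega>\<bar>" "\<bar>g \<omega>\<bar>"] by (simp add: mult.assoc)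
    moreover have "0 \<le> \<bar>f \<omega>\<bar> * \<bar>g \<omega>\<bar>" by simp
    ultimately show ?thesis unfolding abs_mult by linarith
  qed
  then show "AE \<omega> in M. norm (f \<omega> * g \<omega>) \<le> norm ((f \<omega>)\<^sup>2 + (g \<omega>)\<^sup>2)" by simp
qed

lemma square_integrable_add:
  assumes "square_integrable M f" "square_integrable M g"
  shows "square_integrable M (\<lambda>\<omega>. f \<omega> + g \<omega>)"
proof -
  have "integrable M (\<lambda>\<omega>. (f \<omega>)\<^sup>2 + (g \<omega>)\<^sup>2 + 2 * f \<omega> * g \<omega>)"
    using assms square_integrable_mult[OF assms] unfolding square_integrable_def by (auto simp: mult.assoc)
  then show ?thesis
    using assms unfolding square_integrable_def power2_sum by auto
qed

lemma square_integrable_cmult: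
  assumes "square_integrable M f"
  shows "square_integrable M (\<lambda>\<omega>. c * f \<omega>)"
  using assms unfolding square_integrable_def
  by (auto simp: power_mult_distrib intro!: borel_measurable_times)

lemma (in finite_measure) square_integrable_integrable:
  "square_integrable M f \<Longrightarrow> integrable M f"
  unfolding square_integrable_def using square_integrable_imp_integrable by blast

lemma (in finite_measure) square_integrable_bounded:
  assumes "f \<in> borel_measurable M" "\<And>\<omega>. \<bar>f \<omega>\<bar> \<le> B"
  shows "square_integrable M f"
proof -
  have "integrable M (\<lambda>\<omega>. (f \<omega>)\<^sup>2)"
  proof (rule Bochner_Integration.integrable_bound[where f = "\<lambda>_. B\<^sup>2"])
    have "\<bar>f \<omega>\<bar> \<le> \<bar>B\<bar>" for \<omega>
      using assms(2)[of \<omega>] by linarith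
    then have "(f \<omega>)\<^sup>2 \<le> B\<^sup>2" for \<omega>
      by (simp add: abs_le_square_iff)
    then show "AE \<omega> in M. norm ((f \<omega>)\<^sup>2) \<le> norm (B\<^sup>2)" by simp
  qed (use assms(1) in auto)
  with assms(1) show ?thesis unfolding square_integrable_def by simp
qed

lemma cov_commute: "cov M f g = cov M g f"
  unfolding cov_def by (simp add: mult.commute)

lemma cov_self_nonneg: "0 \<le> cov M f f"
  unfolding cov_def by (rule integral_nonneg_AE) simp

lemma cov_cmult_left: "cov M (\<lambda>\<omega>. c * f \<omega>) g = c * cov M f g"
proof -
  have "(\<lambda>\<omega>. (c * f \<omega> - (\<integral>\<eta>. c * f \<eta> \<partial>M)) * (g \<omega> - (\<integral>\<eta>. g \<eta> \<partial>M))) =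
      (\<lambda>\<omega>. c * ((f \<omega> - (\<integral>\<eta>. f \<eta> \<partial>M)) * (g \<omega> - (\<integral>\<eta>. g \<eta> \<partial>M))))"
    by (simp add: algebra_simps)
  then show ?thesis
    unfolding cov_def by simp
qed

definition cov_matrix :: "'a measure \<Rightarrow> ('a \<Rightarrow> real) \<Rightarrow> ('a \<Rightarrow> real) \<Rightarrow> real \<times> real \<times> real" where
  "cov_matrix M f g = (cov M f f, cov M g g, cov M f g)"

definition survival :: "'a measure \<Rightarrow> ('a \<Rightarrow> real) \<Rightarrow> real \<Rightarrow> real" where
  "survival M Z t = measure M {\<omega> \<in> space M. t < Z \<omega>}"

lemma mono_indicator_greaterThan: "mono (indicator {a<..} :: real \<Rightarrow> real)"
  by (auto simp: mono_def indicator_def)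

definition joint_distr :: "'a measure \<Rightarrow> ('a \<Rightarrow> real) \<Rightarrow> ('a \<Rightarrow> real) \<Rightarrow> (real \<times> real) measure" where
  "joint_distr M Z W = distr M borel (\<lambda>\<omega>. (Z \<omega>, W \<omega>))"

definition indep_distr :: "'a measure \<Rightarrow> ('a \<Rightarrow> real) \<Rightarrow> ('a \<Rightarrow> real) \<Rightarrow> (real \<times> real) measure" where
  "indep_distr M Z W = distr M borel Z \<Otimes>\<^sub>M distr M borel W"

context prob_space
begin

lemma cov_expand:
  assumes "square_integrable M f" "square_integrable M g"
  shows "cov M f g = expectation (\<lambda>\<omega>. f \<omega> * g \<omega>) - expectation f * expectation g"
proof -
  let ?a = "expectation f" and ?b = "expectation g"
  have "(\<lambda>\<omega>. (f \<omega> - ?a) * (g \<omega> - ?b)) = (\<lambda>\<omega>. f \<omega> * g \<omega> - ?b * f \<omega> - ?a * g \<omega> + ?a * ?b)"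
    by (auto simp: algebra_simps)
  then show ?thesis
    using square_integrable_integrable[OF assms(1)] square_integrable_integrable[OF assms(2)]
      square_integrable_mult[OF assms] prob_space unfolding cov_def by simp
qed

lemma cov_add_left:
  assumes "square_integrable M f1" "square_integrable M f2" "square_integrable M g"
  shows "cov M (\<lambda>\<omega>. f1 \<omega> + f2 \<omega>) g = cov M f1 g + cov M f2 g"
proof -
  have "integrable M f1" "integrable M f2"
    using assms(1,2) by (simp_all add: square_integrable_integrable)
  moreover have "integrable M (\<lambda>\<omega>. f1 \<omega> * g \<omega>)" "integrable M (\<lambda>\<omega>. f2 \<omega> * g \<omega>)"
    using assms by (simp_all add: square_integrable_mult)
  ultimately show ?thesis
    using assms square_integrable_add[OF assms(1,2)]
    by (simp add: cov_expand distrib_right)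
qed

lemma cov_bilinear:
  assumes "square_integrable M f1" "square_integrable M f2" "square_integrable M g1" "square_integrable M g2"
  shows "cov M (\<lambda>\<omega>. a * f1 \<omega> + b * f2 \<omega>) (\<lambda>\<omega>. c * g1 \<omega> + d * g2 \<omega>) =
    a * c * cov M f1 g1 + a * d * cov M f1 g2 + b * c * cov M f2 g1 + b * d * cov M f2 g2"
proof -
  have right: "cov M f (\<lambda>\<omega>. c * g1 \<omega> + d * g2 \<omega>) = c * cov M f g1 + d * cov M f g2"
    if "square_integrable M f" for f
    using cov_add_left[OF square_integrable_cmult[OF assms(3)] square_integrable_cmult[OF assms(4)] that]
    by (simp add: cov_commute[of M f] cov_cmult_left)
  have "square_integrable M (\<lambda>\<omega>. c * g1 \<omega> + d * g2 \<omega>)"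
    using assms(3,4) by (intro square_integrable_add square_integrable_cmult)
  then show ?thesis
    using cov_add_left[OF square_integrable_cmult[OF assms(1)] square_integrable_cmult[OF assms(2)]]
      right[OF assms(1)] right[OF assms(2)]
    by (simp add: cov_cmult_left algebra_simps)
qed

lemma cov_add_scaled_right:
  assumes "square_integrable M f" "square_integrable M g1" "square_integrable M g2"
  shows "cov M f (\<lambda>\<omega>. g1 \<omega> + c * g2 \<omega>) = cov M f g1 + c * cov M f g2"
  using cov_bilinear[OF assms(1,1,2,3), of 1 0 1 c] by simp

lemma cov_add_scaled_self:
  assumes "square_integrable M f" "square_integrable M g"
  shows "cov M (\<lambda>\<omega>. f \<omega> + c * g \<omega>) (\<lambda>\<omega>. f \<omega> + c * g \<omega>) =
    cov M f f + 2 * c * cov M f g + c\<^sup>2 * cov M g g"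
  using cov_bilinear[OF assms assms, of 1 c 1 c] cov_commute[of M g f]
  by (simp add: power2_eq_square algebra_simps)

lemma cov_comp_lincomb:
  assumes "square_integrable M (h1 \<circ> Z)" "square_integrable M (h2 \<circ> Z)"
    "square_integrable M (h1 \<circ> Z')" "square_integrable M (h2 \<circ> Z')"
  shows "cov M ((\<lambda>z. x * h1 z + y * h2 z) \<circ> Z) ((\<lambda>z. x * h1 z + y * h2 z) \<circ> Z') =
    cov M (h1 \<circ> Z) (h1 \<circ> Z') * x\<^sup>2 + (cov M (h1 \<circ> Z) (h2 \<circ> Z') + cov M (h2 \<circ> Z) (h1 \<circ> Z')) * x * y
    + cov M (h2 \<circ> Z) (h2 \<circ> Z') * y\<^sup>2"
  using cov_bilinear[OF assms, of x y x y] by (simp add: comp_def power2_eq_square algebra_simps)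

lemma L2_cov_self_pos:
  assumes "L2 M f"
  shows "0 < cov M f f"
proof -
  have f: "square_integrable M f" using assms by (simp add: L2_iff_square_integrable)
  have int: "integrable M (\<lambda>\<omega>. (f \<omega> - expectation f)\<^sup>2)"
    using square_integrable_add[OF f square_integrable_bounded[of "\<lambda>_. - expectation f"]]
    unfolding square_integrable_def by auto
  have "AE \<omega> in M. f \<omega> = expectation f" if "cov M f f = 0"
  proof -
    have "expectation (\<lambda>\<omega>. (f \<omega> - expectation f)\<^sup>2) = 0"
      using that unfolding cov_def by (simp add: power2_eq_square)
    then have "AE \<omega> in M. (f \<omega> - expectation f)\<^sup>2 = 0"
      using integral_nonneg_eq_0_iff_AE[OF int] by simp
    then show ?thesis by auto
  qed
  then have "cov M f f \<noteq> 0"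
    using assms unfolding L2_def by blast
  then show ?thesis
    using cov_self_nonneg[of M f] by linarith
qed

lemma corr_eq_iff:
  assumes "L2 M f" "L2 M g"
  shows "corr M f g = r \<longleftrightarrow> cov M f g = r * sqrt (cov M f f * cov M g g)"
proof -
  have "0 < sqrt (cov M f f * cov M g g)"
    using L2_cov_self_pos[OF assms(1)] L2_cov_self_pos[OF assms(2)] by simp
  then show ?thesis
    unfolding corr_def by (auto simp: divide_eq_eq)
qed

lemma L2_strict_mono_comp:
  assumes "L2 M X" "strict_mono g" "square_integrable M (g \<circ> X)"
  shows "L2 M (g \<circ> X)"
proof -
  have "\<not> (AE \<omega> in M. g (X \<omega>) = c)" for c
  proof
    assume c: "AE \<omega> in M. g (X \<omega>) = c"
    have "\<exists>\<omega>. g (X \<omega>) = c"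
    proof (rule ccontr)
      assume "\<nexists>\<omega>. g (X \<omega>) = c"
      with c have "AE \<omega> in M. False" by simp
      then show False by simp
    qed
    then obtain \<omega> where \<omega>: "g (X \<omega>) = c" ..
    from c have "AE \<omega>' in M. X \<omega>' = X \<omega>"
      by eventually_elim (simp add: \<omega>[symmetric] strict_mono_eq[OF assms(2)])
    then show False using assms(1) unfolding L2_def by auto
  qed
  then show ?thesis
    using assms(3) by (simp add: L2_iff_square_integrable)
qed

lemma cov_self_comp_eq_if_distr_eq:
  assumes [measurable]: "X \<in> borel_measurable M" "Y \<in> borel_measurable M" "h \<in> borel_measurable borel"
    and "distr M borel X = distr M borel Y"
  shows "cov M (h \<circ> X) (h \<circ> X) = cov M (h \<circ> Y) (h \<circ> Y)"
proof -
  have "cov M (h \<circ> Z) (h \<circ> Z) = (\<integral>x. (h x - (\<integral>y. h y \<partial>distr M borel Z)) *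
      (h x - (\<integral>y. h y \<partial>distr M borel Z)) \<partial>distr M borel Z)"
    if [measurable]: "Z \<in> borel_measurable M" for Z
    unfolding cov_def by (simp add: integral_distr comp_def)
  then show ?thesis using assms by simp
qed

lemma square_integrable_indicator_greaterThan_comp:
  fixes a :: real
  assumes "Z \<in> borel_measurable M"
  shows "square_integrable M (indicator {a<..} \<circ> Z)"
  using assms by (intro square_integrable_bounded[where B = 1]) (auto simp: indicator_def)

lemma cov_indicator_comp:
  assumes [measurable]: "X \<in> borel_measurable M" "Z \<in> borel_measurable M"
  shows "cov M (indicator {s<..} \<circ> X) (indicator {t<..} \<circ> Z) =
    prob {\<omega> \<in> space M. s < X \<omega> \<and> t < Z \<omega>} - survival M X s * survival M Z t"
proof -
  have E: "expectation f = prob A" if "A \<in> events" "\<And>\<omega>. \<omega> \<in> space M \<Longrightarrow> f \<omega> = indicator A \<omega>"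
    for f :: "'a \<Rightarrow> real" and A
    using that by (subst Bochner_Integration.integral_cong[OF refl, where g = "indicator A"]) auto
  have "expectation (\<lambda>\<omega>. indicator {s<..} (X \<omega>) * indicator {t<..} (Z \<omega>) :: real) =
      prob {\<omega> \<in> space M. s < X \<omega> \<and> t < Z \<omega>}"
    "expectation (\<lambda>\<omega>. indicator {s<..} (X \<omega>) :: real) = prob {\<omega> \<in> space M. s < X \<omega>}"
    "expectation (\<lambda>\<omega>. indicator {t<..} (Z \<omega>) :: real) = prob {\<omega> \<in> space M. t < Z \<omega>}"
    by (rule E; auto simp: indicator_def)+
  then show ?thesis
    using square_integrable_indicator_greaterThan_comp[of X s]
      square_integrable_indicator_greaterThan_comp[of Z t]
    by (simp add: cov_expand comp_def survival_def)
qed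

lemma cov_indicator_comp_self:
  assumes "X \<in> borel_measurable M"
  shows "cov M (indicator {s<..} \<circ> X) (indicator {t<..} \<circ> X) =
    survival M X (max s t) - survival M X s * survival M X t"
proof -
  have "{\<omega> \<in> space M. s < X \<omega> \<and> t < X \<omega>} = {\<omega> \<in> space M. max s t < X \<omega>}" by auto
  then show ?thesis
    using cov_indicator_comp[OF assms assms, of s t] by (simp add: survival_def)
qed

lemma cov_matrix_indicator_comp:
  assumes "Z \<in> borel_measurable M" "s < t"
  shows "cov_matrix M (indicator {s<..} \<circ> Z) (indicator {t<..} \<circ> Z) =
    (survival M Z s - (survival M Z s)\<^sup>2, survival M Z t - (survival M Z t)\<^sup>2,
     survival M Z t - survival M Z s * survival M Z t)"
  using cov_indicator_comp_self[OF assms(1)] assms(2)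
  unfolding cov_matrix_def by (simp add: power2_eq_square max_def)

lemma distr_eq_if_survival_eq:
  assumes [measurable]: "X \<in> borel_measurable M" "Y \<in> borel_measurable M"
    and "\<And>t. survival M X t = survival M Y t"
  shows "distr M borel X = distr M borel Y"
proof (rule cdf_unique)
  show "real_distribution (distr M borel X)" "real_distribution (distr M borel Y)" by auto
  have "cdf (distr M borel Z) t = 1 - survival M Z t"
    if [measurable]: "Z \<in> borel_measurable M" for Z :: "'a \<Rightarrow> real" and t
  proof -
    have "Z -` {..t} \<inter> space M = space M - {\<omega> \<in> space M. t < Z \<omega>}" by auto
    then show ?thesis
      unfolding cdf_def survival_def by (simp add: measure_distr prob_compl)
  qed
  then show "cdf (distr M borel X) = cdf (distr M borel Y)"
    using assms(3) by auto
qed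

lemma obtain_survival_thresholds:
  assumes [measurable]: "Y \<in> borel_measurable M"
    and "infinite (supp M Y) \<or> card (supp M Y) > 2"
  obtains t1 t2 where "t1 < t2" "0 < survival M Y t2" "survival M Y t2 < survival M Y t1"
    "survival M Y t1 < 1"
proof -
  obtain y1 y2 y3 where y: "y1 \<in> supp M Y" "y2 \<in> supp M Y" "y3 \<in> supp M Y" "y1 < y2" "y2 < y3"
    using obtain_three_increasing[OF assms(2)] by blast
  define e where "e = min (y2 - y1) (y3 - y2) / 4"
  define t1 t2 where "t1 = (y1 + y2) / 2" "t2 = (y2 + y3) / 2"
  let ?I = "\<lambda>y. {\<omega> \<in> space M. y - e < Y \<omega> \<and> Y \<omega> \<le> y + e}"
  have e: "0 < e" using y unfolding e_def by simp
  have pos: "0 < prob (?I y)" if "y \<in> supp M Y" for y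
    using that e unfolding supp_def by auto
  have "4 * e \<le> y2 - y1" "4 * e \<le> y3 - y2"
    unfolding e_def by auto
  then have gaps: "y1 + e < t1" "t1 < y2 - e" "y2 + e < t2" "t2 < y3 - e"
    using e unfolding t1_t2_def by (auto simp: field_simps)
  have "prob (?I y3) \<le> survival M Y t2"
    unfolding survival_def using gaps by (intro finite_measure_mono) auto
  moreover have "survival M Y t2 + prob (?I y2) = prob ({\<omega> \<in> space M. t2 < Y \<omega>} \<union> ?I y2)"
    unfolding survival_def using gaps by (intro finite_measure_Union[symmetric]) auto
  moreover have "prob ({\<omega> \<in> space M. t2 < Y \<omega>} \<union> ?I y2) \<le> survival M Y t1"
    unfolding survival_def using gaps e by (intro finite_measure_mono) auto
  ultimately have "0 < survival M Y t2" "survival M Y t2 < survival M Y t1"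
    using pos[OF y(2)] pos[OF y(3)] by linarith+
  moreover have "survival M Y t1 + prob (?I y1) = prob ({\<omega> \<in> space M. t1 < Y \<omega>} \<union> ?I y1)"
    unfolding survival_def using gaps by (intro finite_measure_Union[symmetric]) auto
  then have "survival M Y t1 < 1"
    using pos[OF y(1)] prob_le_1[of "{\<omega> \<in> space M. t1 < Y \<omega>} \<union> ?I y1"] by linarith
  moreover have "t1 < t2" using gaps e by simp
  ultimately show ?thesis
    using that by blast
qed

lemma
  fixes Z W :: "'a \<Rightarrow> real"
  assumes [measurable]: "Z \<in> borel_measurable M" "W \<in> borel_measurable M"
    "f \<in> borel_measurable borel" "k \<in> borel_measurable borel"
    and sq: "square_integrable M (f \<circ> Z)" "square_integrable M (k \<circ> W)"
  shows integrable_joint_distr_mult: "integrable (joint_distr M Z W) (\<lambda>z. f (fst z) * k (snd z))"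
    and integrable_indep_distr_mult: "integrable (indep_distr M Z W) (\<lambda>z. f (fst z) * k (snd z))"
    and cov_comp_eq_integral_distr: "cov M (f \<circ> Z) (k \<circ> W) =
      (\<integral>z. f (fst z) * k (snd z) \<partial>joint_distr M Z W) - (\<integral>z. f (fst z) * k (snd z) \<partial>indep_distr M Z W)"
proof -
  have [measurable]: "(\<lambda>z. f (fst z) * k (snd z)) \<in> borel_measurable borel"
    unfolding borel_prod[symmetric] by measurable
  have "integrable M (\<lambda>\<omega>. f (Z \<omega>) * k (W \<omega>))"
    using square_integrable_mult[OF sq] by (simp add: comp_def)
  then show "integrable (joint_distr M Z W) (\<lambda>z. f (fst z) * k (snd z))"
    unfolding joint_distr_def by (subst integrable_distr_eq) auto
  have int_distr: "integrable (distr M borel Z) f" "integrable (distr M borel W) k"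
    using square_integrable_integrable[OF sq(1)] square_integrable_integrable[OF sq(2)]
    by (subst integrable_distr_eq; simp add: comp_def)+
  have sigma_finite: "sigma_finite_measure (distr M borel Z)" "sigma_finite_measure (distr M borel W)"
    by (auto intro!: prob_space_imp_sigma_finite prob_space_distr)
  show "integrable (indep_distr M Z W) (\<lambda>z. f (fst z) * k (snd z))"
    unfolding indep_distr_def using integrable_pair_measure_mult[OF sigma_finite int_distr] .
  have "(\<integral>z. f (fst z) * k (snd z) \<partial>indep_distr M Z W) =
      expectation (\<lambda>\<omega>. f (Z \<omega>)) * expectation (\<lambda>\<omega>. k (W \<omega>))"
    unfolding indep_distr_def using integral_pair_measure_mult[OF sigma_finite int_distr]
    by (simp add: integral_distr)
  moreover have "(\<integral>z. f (fst z) * k (snd z) \<partial>joint_distr M Z W) = expectation (\<lambda>\<omega>. f (Z \<omega>) * k (W \<omega>))"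
    unfolding joint_distr_def by (simp add: integral_distr)
  ultimately show "cov M (f \<circ> Z) (k \<circ> W) =
      (\<integral>z. f (fst z) * k (snd z) \<partial>joint_distr M Z W) - (\<integral>z. f (fst z) * k (snd z) \<partial>indep_distr M Z W)"
    using cov_expand[OF sq] by (simp add: comp_def)
qed

end

section \<open>Correlation invariant under increasing maps\<close>

definition IC_defect ::
    "'a measure \<Rightarrow> real \<Rightarrow> ('a \<Rightarrow> real) \<Rightarrow> ('a \<Rightarrow> real) \<Rightarrow> (real \<Rightarrow> real) \<Rightarrow> (real \<Rightarrow> real) \<Rightarrow> real" where
  "IC_defect M r X Y g h = cov M (g \<circ> X) (h \<circ> Y) + cov M (h \<circ> X) (g \<circ> Y)
     - r * (cov M (g \<circ> X) (h \<circ> X) + cov M (g \<circ> Y) (h \<circ> Y))"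

definition IC_measures ::
    "'a measure \<Rightarrow> real \<Rightarrow> ('a \<Rightarrow> real) \<Rightarrow> ('a \<Rightarrow> real) \<Rightarrow> (real \<times> (real \<times> real) measure) list" where
  "IC_measures M r X Y =
    [(1, joint_distr M X Y), (- 1, indep_distr M X Y), (1, joint_distr M Y X), (- 1, indep_distr M Y X),
     (- r, joint_distr M X X), (r, indep_distr M X X), (- r, joint_distr M Y Y), (r, indep_distr M Y Y)]"

lemma IC_defect_self_eq_0_iff:
  assumes "r = 0 \<or> cov M (g \<circ> X) (g \<circ> X) = cov M (g \<circ> Y) (g \<circ> Y)"
  shows "IC_defect M r X Y g g = 0 \<longleftrightarrow>
    cov M (g \<circ> X) (g \<circ> Y) = r * sqrt (cov M (g \<circ> X) (g \<circ> X) * cov M (g \<circ> Y) (g \<circ> Y))"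
  using assms cov_commute[of M "g \<circ> X" "g \<circ> Y"] cov_self_nonneg[of M "g \<circ> Y"]
  unfolding IC_defect_def by auto

lemma (in prob_space) IC_defect_add_self:
  assumes "square_integrable M (g \<circ> X)" "square_integrable M (h \<circ> X)"
    "square_integrable M (g \<circ> Y)" "square_integrable M (h \<circ> Y)"
  shows "IC_defect M r X Y (\<lambda>x. g x + h x) (\<lambda>x. g x + h x) =
    IC_defect M r X Y g g + 2 * IC_defect M r X Y g h + IC_defect M r X Y h h"
proof -
  have add: "cov M ((\<lambda>x. g x + h x) \<circ> Z) ((\<lambda>x. g x + h x) \<circ> Z') =
      cov M (g \<circ> Z) (g \<circ> Z') + cov M (g \<circ> Z) (h \<circ> Z') + cov M (h \<circ> Z) (g \<circ> Z') + cov M (h \<circ> Z) (h \<circ> Z')"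
    if "square_integrable M (g \<circ> Z)" "square_integrable M (h \<circ> Z)"
      "square_integrable M (g \<circ> Z')" "square_integrable M (h \<circ> Z')" for Z Z'
    using cov_bilinear[OF that, of 1 1 1 1] by (simp add: comp_def)
  show ?thesis
    unfolding IC_defect_def add[OF assms] add[OF assms(1,2,1,2)] add[OF assms(3,4,3,4)]
    using cov_commute[of M "h \<circ> X" "g \<circ> X"] cov_commute[of M "h \<circ> Y" "g \<circ> Y"]
    by (simp add: algebra_simps)
qed

context prob_space
begin

lemma IC_mono_cov_mono:
  assumes IC: "IC_mono M r X Y" and X: "L2 M X" and Y: "L2 M Y" and h: "mono h"
    and hX: "square_integrable M (h \<circ> X)" and hY: "square_integrable M (h \<circ> Y)"
  shows "cov M (h \<circ> X) (h \<circ> Y) = r * sqrt (cov M (h \<circ> X) (h \<circ> X) * cov M (h \<circ> Y) (h \<circ> Y))"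
proof -
  have sX: "square_integrable M X" and sY: "square_integrable M Y"
    using X Y by (simp_all add: L2_iff_square_integrable)
  define g where "g e = (\<lambda>x. e * x + h x)" for e :: real
  let ?P = "\<lambda>Z Z' e. cov M Z Z' * e * e + (cov M Z (h \<circ> Z') + cov M (h \<circ> Z) Z') * e + cov M (h \<circ> Z) (h \<circ> Z')"
  have expand: "cov M (g e \<circ> Z) (g e \<circ> Z') = ?P Z Z' e"
    if "square_integrable M Z" "square_integrable M (h \<circ> Z)"
      "square_integrable M Z'" "square_integrable M (h \<circ> Z')" for e Z Z'
    using cov_bilinear[OF that, of e 1 e 1] by (simp add: g_def comp_def algebra_simps)
  have "?P X Y e = r * sqrt (?P X X e * ?P Y Y e)" if "0 < e" for e
  proof -
    have "strict_mono (g e)"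
      using h that by (auto simp: g_def strict_mono_def mono_def intro: add_less_le_mono)
    moreover have "square_integrable M (g e \<circ> Z)"
      if "square_integrable M Z" "square_integrable M (h \<circ> Z)" for Z
      using square_integrable_add[OF square_integrable_cmult[OF that(1)] that(2)]
      by (simp add: g_def comp_def)
    ultimately have L2: "L2 M (g e \<circ> X)" "L2 M (g e \<circ> Y)"
      using L2_strict_mono_comp X Y sX sY hX hY by auto
    moreover have "g e \<in> borel_measurable borel" "mono (g e)"
      using \<open>strict_mono (g e)\<close> by (simp_all add: borel_measurable_mono strict_mono_mono)
    ultimately have "corr M (g e \<circ> X) (g e \<circ> Y) = r"
      using IC unfolding IC_mono_def admissible_def by blast
    then show ?thesis
      using corr_eq_iff[OF L2] expand sX sY hX hY by simp
  qed
  then have "?P X Y 0 = r * sqrt (?P X X 0 * ?P Y Y 0)"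
    by (intro eq_at_0_if_eq_at_right[where f = "?P X Y" and g = "\<lambda>e. r * sqrt (?P X X e * ?P Y Y e)"])
      (auto intro!: continuous_intros)
  then show ?thesis by simp
qed

lemma IC_mono_cov_matrices:
  assumes IC: "IC_mono M r X Y" and X: "L2 M X" and Y: "L2 M Y" and r: "r \<noteq> 0"
    and h1: "mono h1" and h2: "mono h2"
    and sq: "square_integrable M (h1 \<circ> X)" "square_integrable M (h2 \<circ> X)"
      "square_integrable M (h1 \<circ> Y)" "square_integrable M (h2 \<circ> Y)"
  shows "proportional_sym2 (cov_matrix M (h1 \<circ> X) (h2 \<circ> X)) (cov_matrix M (h1 \<circ> Y) (h2 \<circ> Y))
    \<or> singular_sym2 (cov_matrix M (h1 \<circ> X) (h2 \<circ> X)) \<and> singular_sym2 (cov_matrix M (h1 \<circ> Y) (h2 \<circ> Y))"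
proof -
  define h where "h x y = (\<lambda>z. x * h1 z + y * h2 z)" for x y :: real
  have self: "cov M (h x y \<circ> Z) (h x y \<circ> Z) = cov M (h1 \<circ> Z) (h1 \<circ> Z) * x\<^sup>2
      + 2 * cov M (h1 \<circ> Z) (h2 \<circ> Z) * x * y + cov M (h2 \<circ> Z) (h2 \<circ> Z) * y\<^sup>2"
    if "square_integrable M (h1 \<circ> Z)" "square_integrable M (h2 \<circ> Z)" for x y Z
    using cov_comp_lincomb[OF that that, of x y] cov_commute[of M "h2 \<circ> Z" "h1 \<circ> Z"]
    unfolding h_def by simp
  have main: "cov M (h x y \<circ> X) (h x y \<circ> Y) =
      r * sqrt (cov M (h x y \<circ> X) (h x y \<circ> X) * cov M (h x y \<circ> Y) (h x y \<circ> Y))"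
    if "0 \<le> x" "0 \<le> y" for x y
  proof (rule IC_mono_cov_mono[OF IC X Y])
    show "mono (h x y)"
      using h1 h2 that by (auto simp: h_def mono_def intro!: add_mono mult_left_mono)
    show "square_integrable M (h x y \<circ> X)" "square_integrable M (h x y \<circ> Y)"
      using sq by (auto simp: h_def comp_def intro!: square_integrable_add square_integrable_cmult)
  qed
  show ?thesis
    unfolding cov_matrix_def
  proof (rule proportional_or_singular_if_sqrt_identity[OF r,
        where p = "cov M (h1 \<circ> X) (h1 \<circ> Y)" and q = "cov M (h2 \<circ> X) (h2 \<circ> Y)"
          and w = "cov M (h1 \<circ> X) (h2 \<circ> Y) + cov M (h2 \<circ> X) (h1 \<circ> Y)"])
    fix x y :: real assume xy: "0 \<le> x" "0 \<le> y"
    show "0 \<le> cov M (h1 \<circ> X) (h1 \<circ> X) * x\<^sup>2 + 2 * cov M (h1 \<circ> X) (h2 \<circ> X) * x * y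
        + cov M (h2 \<circ> X) (h2 \<circ> X) * y\<^sup>2"
      using cov_self_nonneg[of M "h x y \<circ> X"] self[OF sq(1,2), of x y] by simp
    show "0 \<le> cov M (h1 \<circ> Y) (h1 \<circ> Y) * x\<^sup>2 + 2 * cov M (h1 \<circ> Y) (h2 \<circ> Y) * x * y
        + cov M (h2 \<circ> Y) (h2 \<circ> Y) * y\<^sup>2"
      using cov_self_nonneg[of M "h x y \<circ> Y"] self[OF sq(3,4), of x y] by simp
    show "cov M (h1 \<circ> X) (h1 \<circ> Y) * x\<^sup>2
        + (cov M (h1 \<circ> X) (h2 \<circ> Y) + cov M (h2 \<circ> X) (h1 \<circ> Y)) * x * y
        + cov M (h2 \<circ> X) (h2 \<circ> Y) * y\<^sup>2 =
      r * sqrt ((cov M (h1 \<circ> X) (h1 \<circ> X) * x\<^sup>2 + 2 * cov M (h1 \<circ> X) (h2 \<circ> X) * x * y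
          + cov M (h2 \<circ> X) (h2 \<circ> X) * y\<^sup>2) *
        (cov M (h1 \<circ> Y) (h1 \<circ> Y) * x\<^sup>2 + 2 * cov M (h1 \<circ> Y) (h2 \<circ> Y) * x * y
          + cov M (h2 \<circ> Y) (h2 \<circ> Y) * y\<^sup>2))"
      using main[OF xy] cov_comp_lincomb[OF sq, of x y] self[OF sq(1,2), of x y]
        self[OF sq(3,4), of x y] unfolding h_def by simp
  qed
qed

lemma IC_mono_proportional_after_perturbation:
  assumes IC: "IC_mono M r X Y" and X: "L2 M X" and Y: "L2 M Y" and r: "r \<noteq> 0"
    and mono: "mono h1" "mono h2" "mono h"
    and sq: "square_integrable M (h1 \<circ> X)" "square_integrable M (h2 \<circ> X)" "square_integrable M (h \<circ> X)"
      "square_integrable M (h1 \<circ> Y)" "square_integrable M (h2 \<circ> Y)" "square_integrable M (h \<circ> Y)"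
    and nonsingular: "\<not> singular_sym2 (cov_matrix M (h1 \<circ> Y) (h2 \<circ> Y))"
  shows "\<exists>c>0. proportional_sym2 (cov_matrix M (h1 \<circ> X) ((\<lambda>x. h2 x + c * h x) \<circ> X))
    (cov_matrix M (h1 \<circ> Y) ((\<lambda>x. h2 x + c * h x) \<circ> Y))"
proof (rule ccontr)
  \<comment> \<open>otherwise every perturbed \<open>Y\<close>-matrix is singular, and by continuity in \<open>c\<close>
    so is the unperturbed one\<close>
  assume contra: "\<not> ?thesis"
  let ?a = "cov M (h1 \<circ> Y) (h1 \<circ> Y)" and ?b = "cov M (h2 \<circ> Y) (h2 \<circ> Y)"
    and ?g = "cov M (h1 \<circ> Y) (h2 \<circ> Y)" and ?d = "cov M (h1 \<circ> Y) (h \<circ> Y)"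
    and ?e = "cov M (h2 \<circ> Y) (h \<circ> Y)" and ?n = "cov M (h \<circ> Y) (h \<circ> Y)"
  have "(?g + c * ?d)\<^sup>2 = ?a * (?b + 2 * c * ?e + c\<^sup>2 * ?n)" if "0 < c" for c
  proof -
    define k where "k = (\<lambda>x. h2 x + c * h x)"
    have "mono k"
      using mono(2,3) that by (auto simp: k_def mono_def intro!: add_mono mult_left_mono)
    have sq_k: "square_integrable M (k \<circ> Z)"
      if "square_integrable M (h2 \<circ> Z)" "square_integrable M (h \<circ> Z)" for Z
      using square_integrable_add[OF that(1) square_integrable_cmult[OF that(2)]]
      by (simp add: k_def comp_def)
    have "proportional_sym2 (cov_matrix M (h1 \<circ> X) (k \<circ> X)) (cov_matrix M (h1 \<circ> Y) (k \<circ> Y))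
      \<or> singular_sym2 (cov_matrix M (h1 \<circ> X) (k \<circ> X)) \<and> singular_sym2 (cov_matrix M (h1 \<circ> Y) (k \<circ> Y))"
      by (rule IC_mono_cov_matrices[OF IC X Y r mono(1) \<open>mono k\<close>
            sq(1) sq_k[OF sq(2,3)] sq(4) sq_k[OF sq(5,6)]])
    moreover have "\<not> proportional_sym2 (cov_matrix M (h1 \<circ> X) (k \<circ> X)) (cov_matrix M (h1 \<circ> Y) (k \<circ> Y))"
      using contra that unfolding k_def by blast
    moreover have "cov M (h1 \<circ> Y) (k \<circ> Y) = ?g + c * ?d"
      using cov_add_scaled_right[OF sq(4,5,6), of c] by (simp add: k_def comp_def)
    moreover have "cov M (k \<circ> Y) (k \<circ> Y) = ?b + 2 * c * ?e + c\<^sup>2 * ?n"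
      using cov_add_scaled_self[OF sq(5,6), of c] by (simp add: k_def comp_def)
    ultimately show ?thesis
      unfolding singular_sym2_def cov_matrix_def by simp
  qed
  then have "(?g + 0 * ?d)\<^sup>2 = ?a * (?b + 2 * 0 * ?e + 0\<^sup>2 * ?n)"
    by (intro eq_at_0_if_eq_at_right[where f = "\<lambda>c. (?g + c * ?d)\<^sup>2"
          and g = "\<lambda>c. ?a * (?b + 2 * c * ?e + c\<^sup>2 * ?n)"])
      (auto intro!: continuous_intros)
  then show False
    using nonsingular unfolding singular_sym2_def cov_matrix_def by simp
qed

lemma IC_mono_indicator_perturbation:
  assumes IC: "IC_mono M r X Y" and X: "L2 M X" and Y: "L2 M Y" and r: "r \<noteq> 0"
    and "s < t" and v: "0 < survival M Y t" "survival M Y t < survival M Y s" "survival M Y s < 1"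
    and h: "mono h" "square_integrable M (h \<circ> X)" "square_integrable M (h \<circ> Y)"
  obtains c where "0 < c"
    "proportional_sym2 (cov_matrix M (indicator {s<..} \<circ> X) ((\<lambda>x. indicator {t<..} x + c * h x) \<circ> X))
      (cov_matrix M (indicator {s<..} \<circ> Y) ((\<lambda>x. indicator {t<..} x + c * h x) \<circ> Y))"
proof -
  have meas: "X \<in> borel_measurable M" "Y \<in> borel_measurable M"
    using X Y unfolding L2_def by auto
  note sq = square_integrable_indicator_greaterThan_comp
  have "\<not> singular_sym2 (cov_matrix M (indicator {s<..} \<circ> Y) (indicator {t<..} \<circ> Y))"
    unfolding cov_matrix_indicator_comp[OF meas(2) \<open>s < t\<close>] using survival_matrix_nonsingular[OF v] .
  then show ?thesis
    using IC_mono_proportional_after_perturbation[of r X Y "indicator {s<..}" "indicator {t<..}" h,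
        OF IC X Y r mono_indicator_greaterThan mono_indicator_greaterThan h(1)
        sq[OF meas(1)] sq[OF meas(1)] h(2) sq[OF meas(2)] sq[OF meas(2)] h(3)] that
    by blast
qed

lemma IC_mono_survival_var_ne_0:
  assumes IC: "IC_mono M r X Y" and X: "L2 M X" and Y: "L2 M Y" and r: "r \<noteq> 0"
    and "s < t" and v: "0 < survival M Y t" "survival M Y t < survival M Y s" "survival M Y s < 1"
  shows "survival M X s - (survival M X s)\<^sup>2 \<noteq> 0"
proof
  assume zero: "survival M X s - (survival M X s)\<^sup>2 = 0"
  have meas[measurable]: "X \<in> borel_measurable M" "Y \<in> borel_measurable M"
    using X Y unfolding L2_def by auto
  have sq_id: "square_integrable M ((\<lambda>x. x) \<circ> Z)" if "L2 M Z" for Z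
    using that by (simp add: L2_iff_square_integrable comp_def)
  have "mono (\<lambda>x::real. x)"
    by (simp add: mono_def)
  then obtain c where "0 < c" and
    "proportional_sym2 (cov_matrix M (indicator {s<..} \<circ> X) ((\<lambda>x. indicator {t<..} x + c * x) \<circ> X))
      (cov_matrix M (indicator {s<..} \<circ> Y) ((\<lambda>x. indicator {t<..} x + c * x) \<circ> Y))"
    by (rule IC_mono_indicator_perturbation[OF IC X Y r \<open>s < t\<close> v _ sq_id[OF X] sq_id[OF Y]])
  then have "cov M (indicator {s<..} \<circ> X) (indicator {s<..} \<circ> X) *
      cov M ((\<lambda>x. indicator {t<..} x + c * x) \<circ> Y) ((\<lambda>x. indicator {t<..} x + c * x) \<circ> Y) =
    cov M (indicator {s<..} \<circ> Y) (indicator {s<..} \<circ> Y) *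
      cov M ((\<lambda>x. indicator {t<..} x + c * x) \<circ> X) ((\<lambda>x. indicator {t<..} x + c * x) \<circ> X)"
    unfolding proportional_sym2_def cov_matrix_def by simp
  moreover have "cov M (indicator {s<..} \<circ> X) (indicator {s<..} \<circ> X) = 0"
    using zero cov_indicator_comp_self[of X s s] by (simp add: power2_eq_square)
  moreover have "0 < survival M Y s * (1 - survival M Y s)"
    using v by simp
  then have "0 < cov M (indicator {s<..} \<circ> Y) (indicator {s<..} \<circ> Y)"
    using cov_indicator_comp_self[of Y s s] by (simp add: algebra_simps)
  moreover have "strict_mono (\<lambda>x. indicator {t<..} x + c * x :: real)"
    using mono_indicator_greaterThan[of t] \<open>0 < c\<close>
    by (auto simp: strict_mono_def mono_def intro: add_le_less_mono)
  then have "0 < cov M ((\<lambda>x. indicator {t<..} x + c * x) \<circ> X) ((\<lambda>x. indicator {t<..} x + c * x) \<circ> X)"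
    using square_integrable_add[OF square_integrable_indicator_greaterThan_comp[of X t]
        square_integrable_cmult[OF sq_id[OF X]]]
    by (intro L2_cov_self_pos L2_strict_mono_comp[OF X]) (simp_all add: comp_def)
  ultimately show False by simp
qed

lemma IC_mono_survival_eq:
  assumes IC: "IC_mono M r X Y" and X: "L2 M X" and Y: "L2 M Y" and r: "r \<noteq> 0"
    and "t1 < t2" and v: "0 < survival M Y t2" "survival M Y t2 < survival M Y t1" "survival M Y t1 < 1"
    and u: "survival M X t1 = survival M Y t1" "survival M X t2 = survival M Y t2"
  shows "survival M X t = survival M Y t"
proof -
  have meas[measurable]: "X \<in> borel_measurable M" "Y \<in> borel_measurable M"
    using X Y unfolding L2_def by auto
  note sq = square_integrable_indicator_greaterThan_comp
  obtain c where "0 < c" and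
    "proportional_sym2
      (cov_matrix M (indicator {t1<..} \<circ> X) ((\<lambda>x. indicator {t2<..} x + c * indicator {t<..} x) \<circ> X))
      (cov_matrix M (indicator {t1<..} \<circ> Y) ((\<lambda>x. indicator {t2<..} x + c * indicator {t<..} x) \<circ> Y))"
    by (rule IC_mono_indicator_perturbation[OF IC X Y r \<open>t1 < t2\<close> v mono_indicator_greaterThan[of t]
          sq[OF meas(1), of t] sq[OF meas(2), of t]])
  then have "cov M (indicator {t1<..} \<circ> X) (indicator {t1<..} \<circ> X) *
      cov M (indicator {t1<..} \<circ> Y) ((\<lambda>x. indicator {t2<..} x + c * indicator {t<..} x) \<circ> Y) =
    cov M (indicator {t1<..} \<circ> Y) (indicator {t1<..} \<circ> Y) *
      cov M (indicator {t1<..} \<circ> X) ((\<lambda>x. indicator {t2<..} x + c * indicator {t<..} x) \<circ> X)"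
    unfolding proportional_sym2_def cov_matrix_def by simp
  moreover have "cov M (indicator {t1<..} \<circ> Z) ((\<lambda>x. indicator {t2<..} x + c * indicator {t<..} x) \<circ> Z) =
      survival M Z t2 - survival M Z t1 * survival M Z t2
      + c * (survival M Z (max t1 t) - survival M Z t1 * survival M Z t)"
    if "Z \<in> borel_measurable M" for Z
    using cov_add_scaled_right[OF sq[OF that, of t1] sq[OF that, of t2] sq[OF that, of t], of c] \<open>t1 < t2\<close>
      cov_indicator_comp_self[OF that, of t1 t2] cov_indicator_comp_self[OF that, of t1 t]
    by (simp add: comp_def max_def)
  moreover have "cov M (indicator {t1<..} \<circ> Z) (indicator {t1<..} \<circ> Z) =
      survival M Z t1 - (survival M Z t1)\<^sup>2"
    if "Z \<in> borel_measurable M" for Z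
    using cov_indicator_comp_self[OF that, of t1 t1] by (simp add: power2_eq_square)
  moreover have "survival M Y t1 - (survival M Y t1)\<^sup>2 \<noteq> 0"
    using v by (simp add: power2_eq_square)
  ultimately have "survival M X (max t1 t) - survival M X t1 * survival M X t =
      survival M Y (max t1 t) - survival M Y t1 * survival M Y t"
    using u \<open>0 < c\<close> by simp
  moreover have "0 < survival M Y t1"
    using v by linarith
  ultimately show ?thesis
    using survival_value_eq_if_cov_eq[where u = "survival M X" and v = "survival M Y", OF u(1)] v(3)
    by blast
qed

lemma IC_mono_same_distr:
  assumes IC: "IC_mono M r X Y" and X: "L2 M X" and Y: "L2 M Y" and r: "r \<noteq> 0"
    and supp: "infinite (supp M Y) \<or> card (supp M Y) > 2"
  shows "distr M borel X = distr M borel Y"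
proof -
  have meas[measurable]: "X \<in> borel_measurable M" "Y \<in> borel_measurable M"
    using X Y unfolding L2_def by auto
  note sq = square_integrable_indicator_greaterThan_comp and mono_ind = mono_indicator_greaterThan
  note sqX = sq[OF meas(1)] and sqY = sq[OF meas(2)]
  obtain t1 t2 where "t1 < t2" and v: "0 < survival M Y t2" "survival M Y t2 < survival M Y t1"
    "survival M Y t1 < 1"
    using obtain_survival_thresholds[OF _ supp] by auto
  have "proportional_sym2 (cov_matrix M (indicator {t1<..} \<circ> X) (indicator {t2<..} \<circ> X))
      (cov_matrix M (indicator {t1<..} \<circ> Y) (indicator {t2<..} \<circ> Y))
    \<or> singular_sym2 (cov_matrix M (indicator {t1<..} \<circ> X) (indicator {t2<..} \<circ> X))
      \<and> singular_sym2 (cov_matrix M (indicator {t1<..} \<circ> Y) (indicator {t2<..} \<circ> Y))"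
    using meas by (intro IC_mono_cov_matrices[OF IC X Y r mono_ind mono_ind] sq)
  then have "proportional_sym2
      (survival M X t1 - (survival M X t1)\<^sup>2, survival M X t2 - (survival M X t2)\<^sup>2,
        survival M X t2 - survival M X t1 * survival M X t2)
      (survival M Y t1 - (survival M Y t1)\<^sup>2, survival M Y t2 - (survival M Y t2)\<^sup>2,
        survival M Y t2 - survival M Y t1 * survival M Y t2)"
    using survival_matrix_nonsingular[OF v]
    unfolding cov_matrix_indicator_comp[OF meas(1) \<open>t1 < t2\<close>] cov_matrix_indicator_comp[OF meas(2) \<open>t1 < t2\<close>]
    by auto
  then have "survival M X t1 = survival M Y t1 \<and> survival M X t2 = survival M Y t2"
    using survival_values_eq_if_proportional[OF v] IC_mono_survival_var_ne_0[OF IC X Y r \<open>t1 < t2\<close> v]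
    by blast
  then have "survival M X t = survival M Y t" for t
    using IC_mono_survival_eq[OF IC X Y r \<open>t1 < t2\<close> v] by auto
  then show ?thesis
    by (intro distr_eq_if_survival_eq) auto
qed

lemma IC_defect_mono_eq_0:
  assumes IC: "IC_mono M r X Y" and X: "L2 M X" and Y: "L2 M Y"
    and r: "r = 0 \<or> distr M borel X = distr M borel Y"
    and "mono h" "square_integrable M (h \<circ> X)" "square_integrable M (h \<circ> Y)"
  shows "IC_defect M r X Y h h = 0"
proof -
  have "r = 0 \<or> cov M (h \<circ> X) (h \<circ> X) = cov M (h \<circ> Y) (h \<circ> Y)"
    using r X Y borel_measurable_mono[OF \<open>mono h\<close>] cov_self_comp_eq_if_distr_eq
    unfolding L2_def by blast
  then show ?thesis
    using IC_mono_cov_mono[OF IC X Y assms(5-7)] by (simp add: IC_defect_self_eq_0_iff)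
qed

lemma IC_defect_indicators_eq_0:
  assumes [measurable]: "X \<in> borel_measurable M" "Y \<in> borel_measurable M"
    and mono_eq_0: "\<And>h. mono h \<Longrightarrow> square_integrable M (h \<circ> X) \<Longrightarrow> square_integrable M (h \<circ> Y) \<Longrightarrow>
      IC_defect M r X Y h h = 0"
  shows "IC_defect M r X Y (indicator {a<..}) (indicator {b<..}) = 0"
proof -
  note sq = square_integrable_indicator_greaterThan_comp and mono_ind = mono_indicator_greaterThan
  have "mono (\<lambda>x. indicator {a<..} x + indicator {b<..} x :: real)"
    using mono_ind[of a] mono_ind[of b] unfolding mono_def by (simp add: add_mono)
  moreover have "square_integrable M ((\<lambda>x. indicator {a<..} x + indicator {b<..} x :: real) \<circ> Z)"
    if "Z \<in> borel_measurable M" for Z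
    using square_integrable_add[OF sq[OF that, of a] sq[OF that, of b]] by (simp add: comp_def)
  ultimately have "IC_defect M r X Y (\<lambda>x. indicator {a<..} x + indicator {b<..} x)
      (\<lambda>x. indicator {a<..} x + indicator {b<..} x) = 0"
    by (intro mono_eq_0) simp_all
  then show ?thesis
    using IC_defect_add_self[OF sq[of X a] sq[of X b] sq[of Y a] sq[of Y b], of r]
      mono_eq_0[OF mono_ind sq[of X a] sq[of Y a]] mono_eq_0[OF mono_ind sq[of X b] sq[of Y b]]
    by simp
qed

lemma IC_measures_finite:
  assumes "X \<in> borel_measurable M" "Y \<in> borel_measurable M"
  shows "\<forall>(c, \<mu>) \<in> set (IC_measures M r X Y). finite_measure \<mu> \<and> sets \<mu> = sets borel"
  using assms unfolding IC_measures_def joint_distr_def indep_distr_def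
  by (auto intro!: prob_space.finite_measure prob_space_distr prob_space_pair simp: borel_prod[symmetric])

lemma
  assumes "X \<in> borel_measurable M" "Y \<in> borel_measurable M"
    "f \<in> borel_measurable borel" "k \<in> borel_measurable borel"
    and sq: "square_integrable M (f \<circ> X)" "square_integrable M (f \<circ> Y)"
      "square_integrable M (k \<circ> X)" "square_integrable M (k \<circ> Y)"
  shows IC_defect_eq_integral_combination:
      "IC_defect M r X Y f k = (\<Sum>(c, \<mu>) \<leftarrow> IC_measures M r X Y. c * (\<integral>z. f (fst z) * k (snd z) \<partial>\<mu>))"
    and integrable_IC_measures:
      "\<forall>(c, \<mu>) \<in> set (IC_measures M r X Y). integrable \<mu> (\<lambda>z. f (fst z) * k (snd z))"
proof -
  note rules = integrable_joint_distr_mult integrable_indep_distr_mult cov_comp_eq_integral_distr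
  note XY = rules[OF assms(1,2,3,4) sq(1) sq(4)] and YX = rules[OF assms(2,1,3,4) sq(2) sq(3)]
    and XX = rules[OF assms(1,1,3,4) sq(1) sq(3)] and YY = rules[OF assms(2,2,3,4) sq(2) sq(4)]
  show "IC_defect M r X Y f k = (\<Sum>(c, \<mu>) \<leftarrow> IC_measures M r X Y. c * (\<integral>z. f (fst z) * k (snd z) \<partial>\<mu>))"
    unfolding IC_defect_def cov_commute[of M "k \<circ> X" "f \<circ> Y"] XY(3) YX(3) XX(3) YY(3) IC_measures_def
    by (simp add: algebra_simps)
  show "\<forall>(c, \<mu>) \<in> set (IC_measures M r X Y). integrable \<mu> (\<lambda>z. f (fst z) * k (snd z))"
    using XY YX XX YY unfolding IC_measures_def by auto
qed

lemma IC_defect_eq_0_if_indicators: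
  assumes [measurable]: "X \<in> borel_measurable M" "Y \<in> borel_measurable M" "g \<in> borel_measurable borel"
    and indicators: "\<And>a b. IC_defect M r X Y (indicator {a<..}) (indicator {b<..}) = 0"
    and sq: "square_integrable M (g \<circ> X)" "square_integrable M (g \<circ> Y)"
  shows "IC_defect M r X Y g g = 0"
proof -
  note finite = IC_measures_finite[OF assms(1,2), of r]
  have "(\<Sum>(c, \<mu>) \<leftarrow> IC_measures M r X Y. c * (\<integral>z. g (fst z) * g (snd z) \<partial>\<mu>)) = 0"
  proof (rule integral_combination_eq_0_if_quadrants)
    show "\<forall>(c, \<mu>) \<in> set (IC_measures M r X Y).
        finite_measure \<mu> \<and> sets \<mu> = sets borel \<and> integrable \<mu> (\<lambda>z. g (fst z) * g (snd z))"
      using finite integrable_IC_measures[OF assms(1-3,3) sq sq] by fastforce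
    show "(\<lambda>z. g (fst z) * g (snd z)) \<in> borel_measurable borel"
      unfolding borel_prod[symmetric] by measurable
    fix a b :: real
    have "measure \<mu> ({a<..} \<times> {b<..}) = (\<integral>z. indicator {a<..} (fst z) * indicator {b<..} (snd z) \<partial>\<mu>)"
      if "sets \<mu> = sets borel" for \<mu> :: "(real \<times> real) measure"
      using sets_eq_imp_space_eq[OF that] by (simp add: indicator_times[symmetric])
    then have "(\<Sum>(c, \<mu>) \<leftarrow> IC_measures M r X Y. c * measure \<mu> ({a<..} \<times> {b<..})) =
        IC_defect M r X Y (indicator {a<..}) (indicator {b<..})"
      using finite
        IC_defect_eq_integral_combination[OF assms(1,2), of "indicator {a<..}" "indicator {b<..}" r]
        square_integrable_indicator_greaterThan_comp[OF assms(1)]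
        square_integrable_indicator_greaterThan_comp[OF assms(2)]
      unfolding IC_measures_def by simp
    then show "(\<Sum>(c, \<mu>) \<leftarrow> IC_measures M r X Y. c * measure \<mu> ({a<..} \<times> {b<..})) = 0"
      using indicators by simp
  qed
  then show ?thesis
    using IC_defect_eq_integral_combination[OF assms(1-3,3) sq sq] by simp
qed

lemma IC_if_IC_mono:
  assumes IC: "IC_mono M r X Y" and X: "L2 M X" and Y: "L2 M Y"
    and r: "r = 0 \<or> distr M borel X = distr M borel Y"
  shows "IC M r X Y"
  unfolding IC_def
proof (intro conjI allI impI)
  have meas[measurable]: "X \<in> borel_measurable M" "Y \<in> borel_measurable M"
    using X Y unfolding L2_def by auto
  show "corr M X Y = r"
    using IC unfolding IC_mono_def by simp
  fix g assume "admissible M g X Y"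
  then have [measurable]: "g \<in> borel_measurable borel" and L2: "L2 M (g \<circ> X)" "L2 M (g \<circ> Y)"
    unfolding admissible_def by auto
  have "IC_defect M r X Y (indicator {a<..}) (indicator {b<..}) = 0" for a b
    using IC_defect_indicators_eq_0 IC_defect_mono_eq_0[OF IC X Y r] by simp
  then have "IC_defect M r X Y g g = 0"
    using L2 by (intro IC_defect_eq_0_if_indicators) (auto simp: L2_iff_square_integrable)
  moreover have "r = 0 \<or> cov M (g \<circ> X) (g \<circ> X) = cov M (g \<circ> Y) (g \<circ> Y)"
    using r cov_self_comp_eq_if_distr_eq[OF meas] by auto
  ultimately show "corr M (g \<circ> X) (g \<circ> Y) = r"
    by (simp add: corr_eq_iff[OF L2] IC_defect_self_eq_0_iff)
qed

end

theorem theorem5: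
  fixes M :: "'a measure" and X Y :: "'a \<Rightarrow> real" and r :: real
  assumes "prob_space M" and "atomless M"
    and "L2 M X" and "L2 M Y"
    and "r = corr M X Y"
    and "r = 0
         \<or> distr M borel X = distr M borel Y
         \<or> (distr M borel X \<noteq> distr M borel Y \<and> (infinite (supp M Y) \<or> card (supp M Y) > 2))"
  shows "(IC M r X Y \<longleftrightarrow> IC_mono M r X Y)
       \<and> ((distr M borel X \<noteq> distr M borel Y \<and> (infinite (supp M Y) \<or> card (supp M Y) > 2)
            \<and> IC_mono M r X Y) \<longrightarrow> r = 0)"
proof -
  interpret prob_space M by fact
  have r_eq_0: "r = 0" if "IC_mono M r X Y" "distr M borel X \<noteq> distr M borel Y"
      "infinite (supp M Y) \<or> card (supp M Y) > 2"
    using IC_mono_same_distr[OF that(1) assms(3,4) _ that(3)] that(2) by blast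
  have "IC_mono M r X Y" if "IC M r X Y"
    using that unfolding IC_def IC_mono_def by simp
  moreover have "IC M r X Y" if "IC_mono M r X Y"
    using IC_if_IC_mono[OF that assms(3,4)] r_eq_0[OF that] assms(6) by blast
  ultimately show ?thesis
    using r_eq_0 by blast
qed

end
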